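(* There is a first order formula $\theta(u,v)$ of the vocabulary $\{+,\cdot,+',\cdot'\}$ such that $P(+,\cdot,\{+',\cdot'\})\cup P(+',\cdot',\{+,\cdot\})\vdash \mathrm{ISOM}(+,\cdot,+',\cdot')$, where $\mathrm{ISOM}(+,\cdot,+',\cdot')$ is the first order sentence expressing that the relation defined by $\theta(u,v)$ is (the graph of) an isomorphism from the structure given by $+,\cdot$ onto the structure given by $+',\cdot'$ (i.e. it is a bijective function $\pi$ of the domain with $\pi(x+y)=\pi(x)+'\pi(y)$ and $\pi(x\cdot y)=\pi(x)\cdot'\pi(y)$ for all $x,y$).
   Context: $+,\cdot,+',\cdot'$ are binary function symbols. $P(+,\cdot)$ denotes the first order Peano axioms in the vocabulary $\{+,\cdot\}$, with Induction Schema $\forall x_1\ldots x_n((\phi(0,\bar x)\wedge\forall y(\phi(y,\bar x)\to\phi(y+1,\bar x)))\to\forall y\phi(y,\bar x))$, where $0$ and $1$ are defined terms denoting the identity elements of $+$ and $\cdot$. For a vocabulary $L$, $P(+,\cdot,L)$ denotes the extension of $P(+,\cdot)$ in which the Induction Schema is taken for all first order formulas of the vocabulary $\{+,\cdot\}\cup L$; $P(+',\cdot',L)$ is defined analogously for $\{+',\cdot'\}$. $\vdash$ is first order provability. *)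

theory Defs
  imports Main
begin

datatype fsym = Plus | Times | Plus' | Times'

datatype trm = Var nat | Fn fsym trm trm

datatype form = Eq trm trm | Bot | Imp form form | All nat form

definition Neg :: "form \<Rightarrow> form" where "Neg p = Imp p Bot"
definition And :: "form \<Rightarrow> form \<Rightarrow> form" where "And p q = Neg (Imp p (Neg q))"
definition Ex :: "nat \<Rightarrow> form \<Rightarrow> form" where "Ex x p = Neg (All x (Neg p))"

fun tvars :: "trm \<Rightarrow> nat set" where
  "tvars (Var x) = {x}"
| "tvars (Fn f s t) = tvars s \<union> tvars t"

fun fv :: "form \<Rightarrow> nat set" where
  "fv (Eq s t) = tvars s \<union> tvars t"
| "fv Bot = {}"
| "fv (Imp p q) = fv p \<union> fv q"
| "fv (All x p) = fv p - {x}"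

fun tmax :: "trm \<Rightarrow> nat" where
  "tmax (Var x) = x"
| "tmax (Fn f s t) = max (tmax s) (tmax t)"

fun fmax :: "form \<Rightarrow> nat" where
  "fmax (Eq s t) = max (tmax s) (tmax t)"
| "fmax Bot = 0"
| "fmax (Imp p q) = max (fmax p) (fmax q)"
| "fmax (All x p) = max x (fmax p)"

fun tsubst :: "nat \<Rightarrow> trm \<Rightarrow> trm \<Rightarrow> trm" where
  "tsubst x t (Var y) = (if x = y then t else Var y)"
| "tsubst x t (Fn f a b) = Fn f (tsubst x t a) (tsubst x t b)"

text \<open>Plain substitution of t for the free occurrences of x (used only when substitutable).\<close>
fun subst :: "nat \<Rightarrow> trm \<Rightarrow> form \<Rightarrow> form" where
  "subst x t (Eq a b) = Eq (tsubst x t a) (tsubst x t b)"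
| "subst x t Bot = Bot"
| "subst x t (Imp p q) = Imp (subst x t p) (subst x t q)"
| "subst x t (All y p) = (if x = y then All y p else All y (subst x t p))"

fun substitutable :: "nat \<Rightarrow> trm \<Rightarrow> form \<Rightarrow> bool" where
  "substitutable x t (Eq a b) = True"
| "substitutable x t Bot = True"
| "substitutable x t (Imp p q) = (substitutable x t p \<and> substitutable x t q)"
| "substitutable x t (All y p) =
     (x \<notin> fv (All y p) \<or> (y \<notin> tvars t \<and> substitutable x t p))"

definition close :: "form \<Rightarrow> form" where
  "close p = foldr All (sorted_list_of_set (fv p)) p"

inductive logax :: "form \<Rightarrow> bool" where
  ax1: "logax (Imp p (Imp q p))"
| ax2: "logax (Imp (Imp p (Imp q r)) (Imp (Imp p q) (Imp p r)))"
| ax3: "logax (Imp (Neg (Neg p)) p)"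
| q1: "substitutable x t p \<Longrightarrow> logax (Imp (All x p) (subst x t p))"
| q2: "x \<notin> fv p \<Longrightarrow> logax (Imp p (All x p))"
| q3: "logax (Imp (All x (Imp p q)) (Imp (All x p) (All x q)))"
| eq_refl: "logax (Eq (Var x) (Var x))"
| eq_atom: "logax (Imp (Eq (Var x) (Var y)) (Imp (Eq (Var x) (Var z)) (Eq (Var y) (Var z))))"
| eq_fn: "logax (Imp (Eq (Var x1) (Var y1)) (Imp (Eq (Var x2) (Var y2))
            (Eq (Fn f (Var x1) (Var x2)) (Fn f (Var y1) (Var y2)))))"
| gen: "logax p \<Longrightarrow> logax (All x p)"

inductive prov :: "form set \<Rightarrow> form \<Rightarrow> bool" (infix "\<turnstile>" 55) where
  hyp: "p \<in> \<Gamma> \<Longrightarrow> \<Gamma> \<turnstile> p"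
| lax: "logax p \<Longrightarrow> \<Gamma> \<turnstile> p"
| mp: "\<Gamma> \<turnstile> Imp p q \<Longrightarrow> \<Gamma> \<turnstile> p \<Longrightarrow> \<Gamma> \<turnstile> q"

section \<open>Peano axioms P(p,m) with 0, 1 defined as identity elements\<close>

definition opp :: "fsym \<Rightarrow> trm \<Rightarrow> trm \<Rightarrow> trm" where "opp f a b = Fn f a b"

definition ZERO :: "fsym \<Rightarrow> nat \<Rightarrow> form" where
  "ZERO p v = All (Suc v) (And (Eq (Fn p (Var (Suc v)) (Var v)) (Var (Suc v)))
                               (Eq (Fn p (Var v) (Var (Suc v))) (Var (Suc v))))"

text \<open>SUCC p m w y: w = y + 1, i.e. exists o, o is the identity of m and w = y p o.\<close>
definition SUCC :: "fsym \<Rightarrow> fsym \<Rightarrow> nat \<Rightarrow> nat \<Rightarrow> form" where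
  "SUCC p m w y = (let o' = Suc (max w y) in
      Ex o' (And (ZERO m o') (Eq (Var w) (Fn p (Var y) (Var o')))))"

definition PA_basic :: "fsym \<Rightarrow> fsym \<Rightarrow> form set" where
  "PA_basic p m = {
     Ex 0 (ZERO p 0),
     Ex 0 (ZERO m 0),
     All 0 (All 1 (Imp (ZERO p 0) (Imp (ZERO m 1)
        (All 2 (Neg (Eq (Fn p (Var 2) (Var 1)) (Var 0))))))),
     All 1 (Imp (ZERO m 1) (All 2 (All 3
        (Imp (Eq (Fn p (Var 2) (Var 1)) (Fn p (Var 3) (Var 1))) (Eq (Var 2) (Var 3)))))),
     All 1 (Imp (ZERO m 1) (All 2 (All 3
        (Eq (Fn p (Var 2) (Fn p (Var 3) (Var 1))) (Fn p (Fn p (Var 2) (Var 3)) (Var 1)))))),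
     All 0 (Imp (ZERO p 0) (All 2 (Eq (Fn m (Var 2) (Var 0)) (Var 0)))),
     All 1 (Imp (ZERO m 1) (All 2 (All 3
        (Eq (Fn m (Var 2) (Fn p (Var 3) (Var 1))) (Fn p (Fn m (Var 2) (Var 3)) (Var 2))))))
   }"

text \<open>Induction instance for formula phi (of the full vocabulary) in variable y, parameters
  universally closed:  ((phi(0) and forall y (phi(y) -> phi(y+1))) -> forall y phi(y)).
  phi(0) is rendered as forall y (ZERO y -> phi), and phi(y+1) as
  forall w (w = y+1 -> forall y (y = w -> phi)) with w fresh.\<close>
definition IND :: "fsym \<Rightarrow> fsym \<Rightarrow> form \<Rightarrow> nat \<Rightarrow> form" where
  "IND p m phi y = (let w = Suc (max y (fmax phi)) in
     close (Imp (And (All y (Imp (ZERO p y) phi))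
                     (All y (Imp phi (All w (Imp (SUCC p m w y)
                                                 (All y (Imp (Eq (Var y) (Var w)) phi)))))))
                (All y phi)))"

text \<open>P(p, m, L) where L is the other pair of symbols: induction for all formulas of the
  full four-symbol vocabulary.\<close>
definition PA :: "fsym \<Rightarrow> fsym \<Rightarrow> form set" where
  "PA p m = PA_basic p m \<union> {IND p m phi y | phi y. True}"

section \<open>The sentence ISOM for a formula theta(u,v) with u = Var 0, v = Var 1\<close>

text \<open>theta(t1,t2) for terms t1,t2 not containing variables 0,1.\<close>
definition inst :: "form \<Rightarrow> trm \<Rightarrow> trm \<Rightarrow> form" where
  "inst th t1 t2 = All 0 (All 1 (Imp (And (Eq (Var 0) t1) (Eq (Var 1) t2)) th))"

definition TOTAL :: "form \<Rightarrow> form" where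
  "TOTAL th = All 2 (Ex 3 (And (inst th (Var 2) (Var 3))
                          (All 4 (Imp (inst th (Var 2) (Var 4)) (Eq (Var 4) (Var 3))))))"

definition ONTO :: "form \<Rightarrow> form" where
  "ONTO th = All 3 (Ex 2 (inst th (Var 2) (Var 3)))"

definition INJ :: "form \<Rightarrow> form" where
  "INJ th = All 2 (All 4 (All 3 (Imp (And (inst th (Var 2) (Var 3)) (inst th (Var 4) (Var 3)))
                                 (Eq (Var 2) (Var 4)))))"

definition HOM :: "fsym \<Rightarrow> fsym \<Rightarrow> form \<Rightarrow> form" where
  "HOM f g th = All 2 (All 3 (All 4 (All 5
      (Imp (And (inst th (Var 2) (Var 4)) (inst th (Var 3) (Var 5)))
           (inst th (Fn f (Var 2) (Var 3)) (Fn g (Var 4) (Var 5)))))))"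

definition ISOM :: "form \<Rightarrow> form" where
  "ISOM th = And (TOTAL th) (And (ONTO th) (And (INJ th)
               (And (HOM Plus Plus' th) (HOM Times Times' th))))"

end

(*
  By the completeness theorem for the Hilbert calculus (proved by Henkin's construction) it
  suffices to show that ISOM theta holds in every model of both Peano theories. In such a model
  the structure with + and * codes finite sets and pairs by Goedel's beta-function, so theta(u, v)
  can say: "some coded finite set of pairs contains (u, v) and leads from each of its pairs back
  to (0, 0') by steps from (x + 1, y +' 1') to (x, y)". Both induction schemes cover formulas of
  the full vocabulary, in particular formulas mentioning theta. Induction for + and * shows that
  theta is the graph of a total function that is injective and preserves the operations;
  induction for +' and *' shows that it is onto.
*)

theory Submission
  imports Defs "HOL-Library.Countable"
begin

instance fsym :: countable by countable_datatype
instance trm :: countable by countable_datatype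
instance form :: countable by countable_datatype

section \<open>Semantics\<close>

fun evalt :: "(fsym \<Rightarrow> 'a \<Rightarrow> 'a \<Rightarrow> 'a) \<Rightarrow> (nat \<Rightarrow> 'a) \<Rightarrow> trm \<Rightarrow> 'a" where
  "evalt F e (Var x) = e x"
| "evalt F e (Fn f s t) = F f (evalt F e s) (evalt F e t)"

fun eval :: "'a set \<Rightarrow> (fsym \<Rightarrow> 'a \<Rightarrow> 'a \<Rightarrow> 'a) \<Rightarrow> (nat \<Rightarrow> 'a) \<Rightarrow> form \<Rightarrow> bool" where
  "eval D F e (Eq s t) = (evalt F e s = evalt F e t)"
| "eval D F e Bot = False"
| "eval D F e (Imp p q) = (eval D F e p \<longrightarrow> eval D F e q)"
| "eval D F e (All x p) = (\<forall>a\<in>D. eval D F (e(x:=a)) p)"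

lemma eval_Neg [simp]: "eval D F e (Neg p) = (\<not> eval D F e p)"
  by (simp add: Neg_def)

lemma eval_And [simp]: "eval D F e (And p q) = (eval D F e p \<and> eval D F e q)"
  by (simp add: And_def)

lemma eval_Ex [simp]: "eval D F e (Ex x p) = (\<exists>a\<in>D. eval D F (e(x:=a)) p)"
  by (simp add: Ex_def)

lemma subst_Neg [simp]: "subst x t (Neg p) = Neg (subst x t p)"
  by (simp add: Neg_def)

lemma substitutable_Neg [simp]: "substitutable x t (Neg p) = substitutable x t p"
  by (simp add: Neg_def)

lemma fmax_Neg [simp]: "fmax (Neg p) = fmax p"
  by (simp add: Neg_def)

lemma size_subst [simp]: "size (subst x t p) = size p"
  by (induct p) auto

lemma evalt_closed:
  "(\<And>f a b. a \<in> D \<Longrightarrow> b \<in> D \<Longrightarrow> F f a b \<in> D) \<Longrightarrow> \<forall>n. e n \<in> D \<Longrightarrow> evalt F e t \<in> D"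
  by (induct t) auto

lemma evalt_cong: "\<forall>x\<in>tvars t. e x = e' x \<Longrightarrow> evalt F e t = evalt F e' t"
  by (induct t) auto

lemma eval_cong: "\<forall>x\<in>fv p. e x = e' x \<Longrightarrow> eval D F e p = eval D F e' p"
proof (induct p arbitrary: e e')
  case (Eq s t)
  then show ?case
    using evalt_cong[of s e e' F] evalt_cong[of t e e' F] by auto
next
  case (Imp p q)
  then have "eval D F e p = eval D F e' p" "eval D F e q = eval D F e' q"
    by (auto intro!: Imp(1,2))
  then show ?case by simp
next
  case (All x p)
  then have "\<And>a. eval D F (e(x:=a)) p = eval D F (e'(x:=a)) p"
    by (intro All(1)) auto
  then show ?case by simp
qed auto

lemma tvars_le_tmax: "y \<in> tvars t \<Longrightarrow> y \<le> tmax t"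
  by (induct t) auto

lemma fv_le_fmax: "y \<in> fv p \<Longrightarrow> y \<le> fmax p"
  by (induct p) (auto dest: tvars_le_tmax)

lemma tsubst_trivial: "x \<notin> tvars s \<Longrightarrow> tsubst x t s = s"
  by (induct s) auto

lemma subst_trivial: "x \<notin> fv p \<Longrightarrow> subst x t p = p"
  by (induct p) (auto simp: tsubst_trivial)

lemma evalt_tsubst: "evalt F e (tsubst x t s) = evalt F (e(x := evalt F e t)) s"
  by (induct s) auto

lemma eval_subst:
  "substitutable x t p \<Longrightarrow> eval D F e (subst x t p) = eval D F (e(x := evalt F e t)) p"
proof (induct p arbitrary: e)
  case (Eq a b)
  then show ?case by (simp only: subst.simps eval.simps evalt_tsubst)
next
  case (All y p)
  show ?case
  proof (cases "x \<noteq> y \<and> x \<in> fv (All y p)")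
    case True
    with All(2) have "y \<notin> tvars t" and sp: "substitutable x t p" by auto
    then have "\<And>a. evalt F (e(y:=a)) t = evalt F e t" by (intro evalt_cong) auto
    then have upd: "\<And>a. e(y := a, x := evalt F (e(y:=a)) t) = e(x := evalt F e t, y := a)"
      using True by (auto simp: fun_upd_twist)
    have "eval D F e (subst x t (All y p)) = (\<forall>a\<in>D. eval D F (e(y:=a)) (subst x t p))"
      using True by simp
    also have "\<dots> = (\<forall>a\<in>D. eval D F (e(y := a, x := evalt F (e(y:=a)) t)) p)"
      by (simp only: All(1)[OF sp])
    also have "\<dots> = eval D F (e(x := evalt F e t)) (All y p)"
      by (simp only: upd eval.simps)
    finally show ?thesis .
  next
    case False
    then have "subst x t (All y p) = All y p" by (auto simp: subst_trivial)
    moreover have "eval D F e (All y p) = eval D F (e(x := evalt F e t)) (All y p)"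
      using False by (intro eval_cong) auto
    ultimately show ?thesis by (simp only:)
  qed
qed auto

lemma fv_close [simp]: "fv (close p) = {}"
proof -
  have "finite (tvars t)" for t by (induct t) auto
  then have "finite (fv p)" by (induct p) auto
  moreover have "fv (foldr All xs p) = fv p - set xs" for xs by (induct xs) auto
  ultimately show ?thesis unfolding close_def by simp
qed

lemma eval_close: "\<forall>n. e n \<in> D \<Longrightarrow> eval D F e (close q) \<Longrightarrow> eval D F e q"
proof -
  have "\<forall>n. e n \<in> D \<Longrightarrow> eval D F e (foldr All xs q) \<Longrightarrow> eval D F e q" for xs e
  proof (induct xs arbitrary: e)
    case (Cons x xs)
    then have "eval D F (e(x := e x)) (foldr All xs q)" by (simp del: fun_upd_triv)
    then show ?case using Cons by simp
  qed simp
  then show "\<forall>n. e n \<in> D \<Longrightarrow> eval D F e (close q) \<Longrightarrow> eval D F e q"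
    unfolding close_def .
qed

section \<open>Derived rules of the calculus\<close>

lemma prov_mono: "\<Gamma> \<turnstile> p \<Longrightarrow> \<Gamma> \<subseteq> \<Delta> \<Longrightarrow> \<Delta> \<turnstile> p"
  by (induct rule: prov.induct) (auto intro: prov.intros)

lemma prov_compact: "\<Gamma> \<turnstile> p \<Longrightarrow> \<exists>\<Delta>. finite \<Delta> \<and> \<Delta> \<subseteq> \<Gamma> \<and> \<Delta> \<turnstile> p"
proof (induct rule: prov.induct)
  case (hyp p \<Gamma>)
  then show ?case by (intro exI[of _ "{p}"]) (auto intro: prov.hyp)
next
  case (lax p \<Gamma>)
  then show ?case by (intro exI[of _ "{}"]) (auto intro: prov.lax)
next
  case (mp \<Gamma> p q)
  then obtain A B where "finite A" "A \<subseteq> \<Gamma>" "A \<turnstile> Imp p q" "finite B" "B \<subseteq> \<Gamma>" "B \<turnstile> p"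
    by blast
  then show ?case by (intro exI[of _ "A \<union> B"]) (auto intro: prov.mp prov_mono)
qed

lemma weaken: "\<Gamma> \<turnstile> p \<Longrightarrow> insert q \<Gamma> \<turnstile> p"
  by (erule prov_mono) auto

lemma hyp_insert: "insert p \<Gamma> \<turnstile> p"
  by (rule hyp) simp

lemma imp_refl: "\<Gamma> \<turnstile> Imp p p"
  using mp[OF mp[OF lax[OF ax2] lax[OF ax1]] lax[OF ax1]] by (simp only: ax1)

lemma deduction: "insert A \<Gamma> \<turnstile> B \<Longrightarrow> \<Gamma> \<turnstile> Imp A B"
proof (induct "insert A \<Gamma>" B rule: prov.induct)
  case (hyp p)
  then show ?case using imp_refl mp[OF lax[OF ax1] prov.hyp] by blast
next
  case (lax p)
  then show ?case using mp[OF prov.lax[OF ax1] prov.lax] by blast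
next
  case (mp p q)
  then show ?case using prov.mp[OF prov.mp[OF lax[OF ax2]]] by blast
qed

lemma neg_intro: "insert p \<Gamma> \<turnstile> Bot \<Longrightarrow> \<Gamma> \<turnstile> Neg p"
  unfolding Neg_def by (rule deduction)

lemma neg_elim: "\<Gamma> \<turnstile> Neg p \<Longrightarrow> \<Gamma> \<turnstile> p \<Longrightarrow> \<Gamma> \<turnstile> Bot"
  unfolding Neg_def by (rule mp)

lemma double_neg_elim: "\<Gamma> \<turnstile> Neg (Neg p) \<Longrightarrow> \<Gamma> \<turnstile> p"
  by (rule mp[OF lax[OF ax3]])

lemma by_contradiction: "insert (Neg p) \<Gamma> \<turnstile> Bot \<Longrightarrow> \<Gamma> \<turnstile> p"
  by (rule double_neg_elim, rule neg_intro)

lemma bot_elim: "\<Gamma> \<turnstile> Bot \<Longrightarrow> \<Gamma> \<turnstile> p"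
  by (rule by_contradiction, rule weaken)

lemma all_elim: "\<Gamma> \<turnstile> All x p \<Longrightarrow> substitutable x t p \<Longrightarrow> \<Gamma> \<turnstile> subst x t p"
  by (rule mp[OF lax[OF q1]])

lemma all_intro: "\<Gamma> \<turnstile> p \<Longrightarrow> \<forall>q\<in>\<Gamma>. x \<notin> fv q \<Longrightarrow> \<Gamma> \<turnstile> All x p"
proof (induct rule: prov.induct)
  case (hyp p \<Gamma>)
  then show ?case using mp[OF lax[OF q2] prov.hyp] by blast
next
  case (lax p \<Gamma>)
  then show ?case by (intro prov.lax gen)
next
  case (mp \<Gamma> p q)
  then show ?case using prov.mp[OF prov.mp[OF lax[OF q3]]] by blast
qed

lemma prov_eq_refl: "\<Gamma> \<turnstile> Eq t t"
proof -
  have "\<Gamma> \<turnstile> All 0 (Eq (Var 0) (Var 0))" by (intro lax gen eq_refl)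
  from all_elim[OF this, of t] show ?thesis by simp
qed

text \<open>The equality axioms speak about variables only; they are instantiated with terms
  through variables chosen above all variables of the terms involved.\<close>

lemma prov_eq_subst:
  assumes "\<Gamma> \<turnstile> Eq s t" "\<Gamma> \<turnstile> Eq s u"
  shows "\<Gamma> \<turnstile> Eq t u"
proof -
  define N where "N = Suc (max (tmax s) (max (tmax t) (tmax u)))"
  have fresh: "N+1 \<notin> tvars s" "N+2 \<notin> tvars s" "N+2 \<notin> tvars t"
    by (auto simp: N_def dest!: tvars_le_tmax)
  have "\<Gamma> \<turnstile> All N (All (N+1) (All (N+2) (Imp (Eq (Var N) (Var (N+1)))
     (Imp (Eq (Var N) (Var (N+2))) (Eq (Var (N+1)) (Var (N+2)))))))"
    by (intro lax gen eq_atom)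
  from all_elim[OF this, of s] fresh
  have "\<Gamma> \<turnstile> All (N+1) (All (N+2) (Imp (Eq s (Var (N+1)))
     (Imp (Eq s (Var (N+2))) (Eq (Var (N+1)) (Var (N+2))))))"
    by simp
  from all_elim[OF this, of t] fresh
  have "\<Gamma> \<turnstile> All (N+2) (Imp (Eq s t) (Imp (Eq s (Var (N+2))) (Eq t (Var (N+2)))))"
    by (simp add: tsubst_trivial)
  from all_elim[OF this, of u] fresh
  have "\<Gamma> \<turnstile> Imp (Eq s t) (Imp (Eq s u) (Eq t u))"
    by (simp add: tsubst_trivial)
  then show ?thesis using assms by (blast intro: mp)
qed

lemma prov_eq_sym: "\<Gamma> \<turnstile> Eq s t \<Longrightarrow> \<Gamma> \<turnstile> Eq t s"
  using prov_eq_subst prov_eq_refl by blast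

lemma prov_eq_trans: "\<Gamma> \<turnstile> Eq s t \<Longrightarrow> \<Gamma> \<turnstile> Eq t u \<Longrightarrow> \<Gamma> \<turnstile> Eq s u"
  using prov_eq_subst prov_eq_sym by blast

lemma prov_eq_Fn:
  assumes "\<Gamma> \<turnstile> Eq s1 t1" "\<Gamma> \<turnstile> Eq s2 t2"
  shows "\<Gamma> \<turnstile> Eq (Fn f s1 s2) (Fn f t1 t2)"
proof -
  define N where "N = Suc (max (max (tmax s1) (tmax s2)) (max (tmax t1) (tmax t2)))"
  have fresh: "N+1 \<notin> tvars s1" "N+2 \<notin> tvars s1" "N+3 \<notin> tvars s1"
     "N+2 \<notin> tvars t1" "N+3 \<notin> tvars t1" "N+3 \<notin> tvars s2"
    by (auto simp: N_def dest!: tvars_le_tmax)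
  have "\<Gamma> \<turnstile> All N (All (N+1) (All (N+2) (All (N+3) (Imp (Eq (Var N) (Var (N+1)))
     (Imp (Eq (Var (N+2)) (Var (N+3)))
     (Eq (Fn f (Var N) (Var (N+2))) (Fn f (Var (N+1)) (Var (N+3)))))))))"
    by (intro lax gen eq_fn)
  from all_elim[OF this, of s1] fresh
  have "\<Gamma> \<turnstile> All (N+1) (All (N+2) (All (N+3) (Imp (Eq s1 (Var (N+1)))
     (Imp (Eq (Var (N+2)) (Var (N+3)))
     (Eq (Fn f s1 (Var (N+2))) (Fn f (Var (N+1)) (Var (N+3))))))))"
    by (simp add: tsubst_trivial)
  from all_elim[OF this, of t1] fresh
  have "\<Gamma> \<turnstile> All (N+2) (All (N+3) (Imp (Eq s1 t1)
     (Imp (Eq (Var (N+2)) (Var (N+3))) (Eq (Fn f s1 (Var (N+2))) (Fn f t1 (Var (N+3)))))))"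
    by (simp add: tsubst_trivial)
  from all_elim[OF this, of s2] fresh
  have "\<Gamma> \<turnstile> All (N+3) (Imp (Eq s1 t1)
     (Imp (Eq s2 (Var (N+3))) (Eq (Fn f s1 s2) (Fn f t1 (Var (N+3))))))"
    by (simp add: tsubst_trivial)
  from all_elim[OF this, of t2] fresh
  have "\<Gamma> \<turnstile> Imp (Eq s1 t1) (Imp (Eq s2 t2) (Eq (Fn f s1 s2) (Fn f t1 t2)))"
    by (simp add: tsubst_trivial)
  then show ?thesis using assms by (blast intro: mp)
qed

section \<open>Completeness\<close>

definition consistent :: "form set \<Rightarrow> bool" where
  "consistent \<Gamma> \<longleftrightarrow> \<not> \<Gamma> \<turnstile> Bot"

lemma consistent_subset: "consistent B \<Longrightarrow> A \<subseteq> B \<Longrightarrow> consistent A"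
  unfolding consistent_def using prov_mono by blast

lemma consistent_Union_chain:
  fixes A :: "nat \<Rightarrow> form set"
  assumes chain: "mono A" and cons: "\<And>n. consistent (A n)"
  shows "consistent (\<Union>n. A n)"
  unfolding consistent_def
proof
  assume "\<Union>(range A) \<turnstile> Bot"
  then obtain \<Delta> where fin: "finite \<Delta>" and sub: "\<Delta> \<subseteq> (\<Union>n. A n)" and "\<Delta> \<turnstile> Bot"
    using prov_compact by blast
  from fin sub obtain n where "\<Delta> \<subseteq> (\<Union>i<n. A i)"
    by (rule finite_countable_subset)
  also have "\<dots> \<subseteq> A n"
    by (intro UN_least monoD[OF chain]) simp
  finally have "A n \<turnstile> Bot"
    using \<open>\<Delta> \<turnstile> Bot\<close> prov_mono by blast
  then show False using cons unfolding consistent_def by blast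
qed

lemma substitutable_fresh_var: "fmax p < c \<Longrightarrow> substitutable x (Var c) p"
  by (induct p) auto

lemma fv_subst_var: "fv (subst x (Var c) p) \<subseteq> (fv p - {x}) \<union> {c}"
proof (induct p)
  case (Eq a b)
  have "tvars (tsubst x (Var c) a) \<subseteq> (tvars a - {x}) \<union> {c}" for a
    by (induct a) auto
  then show ?case using Eq by auto
qed auto

lemma subst_rename_back: "fmax p < c \<Longrightarrow> subst c (Var x) (subst x (Var c) p) = p"
proof (induct p)
  case (Eq a b)
  have "tmax a < c \<Longrightarrow> tsubst c (Var x) (tsubst x (Var c) a) = a" for a
    by (induct a) auto
  then show ?case using Eq by simp
next
  case (All y q)
  then have "c \<notin> fv q" using fv_le_fmax by fastforce
  then show ?case using All by (simp add: subst_trivial)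
qed auto

lemma substitutable_rename_back: "fmax p < c \<Longrightarrow> substitutable c (Var x) (subst x (Var c) p)"
proof (induct p)
  case (All y q)
  then have "c \<notin> fv q" using fv_le_fmax by fastforce
  then show ?case using All by simp
qed auto

text \<open>Generalisation over a variable \<open>c\<close> that does not occur free in \<open>\<Gamma>\<close>, followed by
  renaming \<open>c\<close> back into \<open>x\<close>.\<close>

lemma all_intro_fresh_var:
  assumes prv: "\<Gamma> \<turnstile> subst x (Var c) p" and not_fv: "\<forall>q\<in>\<Gamma>. c \<notin> fv q" and c: "fmax p < c"
  shows "\<Gamma> \<turnstile> All x p"
proof -
  define q where "q = subst x (Var c) p"
  have "\<Gamma> \<turnstile> All c q"
    using all_intro prv not_fv unfolding q_def by blast
  moreover have "x \<notin> fv (All c q)"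
    using fv_subst_var[of x c p] unfolding q_def by auto
  ultimately have all_all: "\<Gamma> \<turnstile> All x (All c q)"
    using mp[OF lax[OF q2]] by blast
  have "logax (Imp (All c q) (subst c (Var x) q))"
    unfolding q_def by (rule q1, rule substitutable_rename_back[OF c])
  then have "\<Gamma> \<turnstile> All x (Imp (All c q) p)"
    unfolding q_def using subst_rename_back[OF c] by (auto intro: lax gen)
  then show ?thesis using mp[OF mp[OF lax[OF q3]] all_all] by blast
qed

definition henkin_axiom :: "nat \<Rightarrow> form \<Rightarrow> nat \<Rightarrow> form" where
  "henkin_axiom x p c = Imp (Neg (All x p)) (Neg (subst x (Var c) p))"

lemma consistent_insert_henkin_axiom:
  assumes cons: "consistent \<Gamma>" and not_fv: "\<forall>q\<in>\<Gamma>. c \<notin> fv q" and c: "fmax (All x p) < c"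
  shows "consistent (insert (henkin_axiom x p c) \<Gamma>)"
  unfolding consistent_def
proof
  assume "insert (henkin_axiom x p c) \<Gamma> \<turnstile> Bot"
  then have not_ax: "\<Gamma> \<turnstile> Neg (henkin_axiom x p c)" by (rule neg_intro)
  have "insert (Neg (subst x (Var c) p)) \<Gamma> \<turnstile> henkin_axiom x p c"
    unfolding henkin_axiom_def by (rule mp[OF lax[OF ax1] hyp_insert])
  then have "insert (Neg (subst x (Var c) p)) \<Gamma> \<turnstile> Bot"
    using neg_elim[OF weaken[OF not_ax]] by blast
  then have "\<Gamma> \<turnstile> All x p"
    using all_intro_fresh_var[OF by_contradiction not_fv] c by simp
  then have "insert (Neg (All x p)) \<Gamma> \<turnstile> Bot"
    by (rule neg_elim[OF hyp_insert weaken])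
  then have "insert (Neg (All x p)) \<Gamma> \<turnstile> Neg (subst x (Var c) p)"
    by (rule bot_elim)
  then have "\<Gamma> \<turnstile> henkin_axiom x p c"
    unfolding henkin_axiom_def by (rule deduction)
  then show False
    using cons neg_elim[OF not_ax] unfolding consistent_def by blast
qed

definition fresh_var :: "form list \<Rightarrow> form \<Rightarrow> nat" where
  "fresh_var qs p = Suc (Max (fmax ` insert p (set qs)))"

lemma fmax_less_fresh_var: "q \<in> insert p (set qs) \<Longrightarrow> fmax q < fresh_var qs p"
  unfolding fresh_var_def by (rule le_imp_less_Suc, rule Max_ge) auto

primrec henkin_chain :: "form list \<Rightarrow> nat \<Rightarrow> form list" where
  "henkin_chain S 0 = S"
| "henkin_chain S (Suc n) = (case from_nat n of
      All x p \<Rightarrow> henkin_axiom x p (fresh_var (henkin_chain S n) (All x p)) # henkin_chain S n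
    | _ \<Rightarrow> henkin_chain S n)"

lemma mono_henkin_chain: "mono (\<lambda>n. set (henkin_chain S n))"
  unfolding mono_iff_le_Suc by (auto split: form.splits)

lemma consistent_henkin_chain:
  assumes cons: "consistent (\<Gamma> \<union> set S)" and closed: "\<forall>q\<in>\<Gamma>. fv q = {}"
  shows "consistent (\<Gamma> \<union> set (henkin_chain S n))"
proof (induct n)
  case (Suc n)
  show ?case
  proof (cases "from_nat n :: form")
    case (All x p)
    let ?c = "fresh_var (henkin_chain S n) (All x p)"
    have "?c \<notin> fv q" if "q \<in> \<Gamma> \<union> set (henkin_chain S n)" for q
      using that closed fmax_less_fresh_var[of q "All x p" "henkin_chain S n"] fv_le_fmax[of ?c q]
        by auto
    moreover have "fmax (All x p) < ?c"
      by (rule fmax_less_fresh_var) simp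
    ultimately show ?thesis
      using consistent_insert_henkin_axiom[OF Suc] All by simp
  qed (use Suc in simp_all)
qed (use cons in simp)

primrec lindenbaum_chain :: "form set \<Rightarrow> nat \<Rightarrow> form set" where
  "lindenbaum_chain \<Gamma> 0 = \<Gamma>"
| "lindenbaum_chain \<Gamma> (Suc n) =
    (if consistent (insert (from_nat n) (lindenbaum_chain \<Gamma> n))
     then insert (from_nat n) (lindenbaum_chain \<Gamma> n) else lindenbaum_chain \<Gamma> n)"

definition lindenbaum :: "form set \<Rightarrow> form set" where
  "lindenbaum \<Gamma> = (\<Union>n. lindenbaum_chain \<Gamma> n)"

lemma subset_lindenbaum: "\<Gamma> \<subseteq> lindenbaum \<Gamma>"
  unfolding lindenbaum_def using lindenbaum_chain.simps(1) by blast

lemma consistent_lindenbaum: "consistent \<Gamma> \<Longrightarrow> consistent (lindenbaum \<Gamma>)"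
  unfolding lindenbaum_def
proof (rule consistent_Union_chain)
  show "mono (lindenbaum_chain \<Gamma>)"
    unfolding mono_iff_le_Suc by auto
  show "consistent \<Gamma> \<Longrightarrow> consistent (lindenbaum_chain \<Gamma> n)" for n
    by (induct n) auto
qed

lemma maximal_lindenbaum: "consistent (insert p (lindenbaum \<Gamma>)) \<Longrightarrow> p \<in> lindenbaum \<Gamma>"
proof -
  assume cons: "consistent (insert p (lindenbaum \<Gamma>))"
  have "consistent (insert p (lindenbaum_chain \<Gamma> (to_nat p)))"
    by (rule consistent_subset[OF cons]) (auto simp: lindenbaum_def)
  then have "p \<in> lindenbaum_chain \<Gamma> (Suc (to_nat p))" by simp
  then show ?thesis unfolding lindenbaum_def by blast
qed

locale maximal_consistent =
  fixes H :: "form set"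
  assumes consistent: "consistent H"
    and maximal: "\<And>p. consistent (insert p H) \<Longrightarrow> p \<in> H"
begin

lemma prov_in: "H \<turnstile> p \<Longrightarrow> p \<in> H"
proof (rule maximal)
  assume "H \<turnstile> p"
  then have "H \<turnstile> Neg p \<Longrightarrow> H \<turnstile> Bot" by (rule neg_elim[rotated])
  then show "consistent (insert p H)"
    using consistent neg_intro unfolding consistent_def by blast
qed

lemma Neg_in_iff: "Neg p \<in> H \<longleftrightarrow> p \<notin> H"
proof
  assume "Neg p \<in> H"
  then have "H \<turnstile> Bot" if "p \<in> H" using that by (rule neg_elim[OF hyp hyp])
  then show "p \<notin> H" using consistent unfolding consistent_def by blast
next
  assume "p \<notin> H"
  then have "\<not> consistent (insert p H)" using maximal by blast
  then have "H \<turnstile> Neg p" unfolding consistent_def by (intro neg_intro) simp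
  then show "Neg p \<in> H" by (rule prov_in)
qed

lemma Bot_notin: "Bot \<notin> H"
  using consistent hyp unfolding consistent_def by blast

lemma Imp_in_iff: "Imp p q \<in> H \<longleftrightarrow> (p \<in> H \<longrightarrow> q \<in> H)"
proof (cases "p \<in> H")
  case True
  have "q \<in> H" if "Imp p q \<in> H"
    using True that by (blast intro: prov_in[OF mp[OF hyp hyp]])
  moreover have "Imp p q \<in> H" if "q \<in> H"
    using that by (blast intro: prov_in[OF mp[OF lax[OF ax1] hyp]])
  ultimately show ?thesis using True by blast
next
  case False
  then have "Neg p \<in> H" using Neg_in_iff by blast
  then have "insert p H \<turnstile> q"
    by (rule bot_elim[OF neg_elim[OF weaken[OF hyp] hyp_insert]])
  then show ?thesis using False by (simp add: prov_in deduction)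
qed

end

locale henkin_set = maximal_consistent +
  assumes henkin: "\<And>x p. Neg (All x p) \<in> H \<Longrightarrow> \<exists>c. fmax (All x p) < c \<and> Neg (subst x (Var c) p) \<in> H"
begin

lemma All_in_iff: "All x p \<in> H \<longleftrightarrow> (\<forall>c>fmax (All x p). subst x (Var c) p \<in> H)"
proof
  assume "All x p \<in> H"
  then show "\<forall>c>fmax (All x p). subst x (Var c) p \<in> H"
    by (simp add: prov_in all_elim hyp substitutable_fresh_var)
next
  assume "\<forall>c>fmax (All x p). subst x (Var c) p \<in> H"
  then show "All x p \<in> H"
    using henkin Neg_in_iff by blast
qed

text \<open>Apply the Henkin property to \<open>\<forall>y. \<not> y = t\<close> for a large \<open>y\<close>.\<close>

lemma eq_var_witness: "\<exists>c>N. Eq t (Var c) \<in> H"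
proof -
  define y where "y = Suc (max N (tmax t))"
  have y: "y \<notin> tvars t" "N < y"
    unfolding y_def using tvars_le_tmax by fastforce+
  have "insert (All y (Neg (Eq (Var y) t))) H \<turnstile> subst y t (Neg (Eq (Var y) t))"
    by (rule all_elim[OF hyp_insert]) simp
  then have "insert (All y (Neg (Eq (Var y) t))) H \<turnstile> Neg (Eq t t)"
    using y by (simp add: tsubst_trivial)
  then have "Neg (All y (Neg (Eq (Var y) t))) \<in> H"
    by (rule prov_in[OF neg_intro[OF neg_elim[OF _ prov_eq_refl]]])
  then obtain c where c: "fmax (All y (Neg (Eq (Var y) t))) < c"
    and "Neg (subst y (Var c) (Neg (Eq (Var y) t))) \<in> H"
    using henkin by blast
  then have "Neg (Neg (Eq (Var c) t)) \<in> H"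
    using y by (simp add: tsubst_trivial)
  then have "Eq t (Var c) \<in> H"
    by (rule prov_in[OF prov_eq_sym[OF double_neg_elim[OF hyp]]])
  moreover have "N < c" using c y by simp
  ultimately show ?thesis by blast
qed

definition eq_class :: "trm \<Rightarrow> trm set" where
  "eq_class t = {s. Eq t s \<in> H}"

lemma eq_class_eq_iff: "eq_class s = eq_class t \<longleftrightarrow> Eq s t \<in> H"
proof
  assume "eq_class s = eq_class t"
  moreover have "t \<in> eq_class t"
    unfolding eq_class_def using prov_eq_refl prov_in by blast
  ultimately show "Eq s t \<in> H" unfolding eq_class_def by blast
next
  assume "Eq s t \<in> H"
  then have st: "H \<turnstile> Eq s t" by (rule hyp)
  have "Eq s u \<in> H \<longleftrightarrow> Eq t u \<in> H" for u
    using prov_in[OF prov_eq_subst[OF st hyp]] prov_in[OF prov_eq_trans[OF st hyp]] by blast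
  then show "eq_class s = eq_class t" unfolding eq_class_def by blast
qed

definition canon_dom :: "trm set set" where
  "canon_dom = range eq_class"

definition canon_fn :: "fsym \<Rightarrow> trm set \<Rightarrow> trm set \<Rightarrow> trm set" where
  "canon_fn f A B = eq_class (Fn f (SOME s. A = eq_class s) (SOME t. B = eq_class t))"

definition canon_env :: "nat \<Rightarrow> trm set" where
  "canon_env x = eq_class (Var x)"

lemma canon_fn_eq_class: "canon_fn f (eq_class s) (eq_class t) = eq_class (Fn f s t)"
proof -
  let ?s = "SOME s'. eq_class s = eq_class s'" and ?t = "SOME t'. eq_class t = eq_class t'"
  have "eq_class s = eq_class ?s" "eq_class t = eq_class ?t" by (rule someI, rule refl)+
  then have "Eq ?s s \<in> H" "Eq ?t t \<in> H" using eq_class_eq_iff by metis+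
  then have "Eq (Fn f ?s ?t) (Fn f s t) \<in> H"
    by (blast intro: prov_in[OF prov_eq_Fn[OF hyp hyp]])
  then show ?thesis unfolding canon_fn_def using eq_class_eq_iff by simp
qed

lemma evalt_canon: "evalt canon_fn canon_env t = eq_class t"
  by (induct t) (auto simp: canon_env_def canon_fn_eq_class)

lemma eval_canon_All:
  "eval canon_dom canon_fn canon_env (All x p) \<longleftrightarrow>
    (\<forall>c>fmax (All x p). eval canon_dom canon_fn canon_env (subst x (Var c) p))"
proof -
  have subst: "eval canon_dom canon_fn canon_env (subst x (Var c) p) =
      eval canon_dom canon_fn (canon_env(x := eq_class (Var c))) p" if "fmax (All x p) < c" for c
    using eval_subst[of x "Var c" p canon_dom canon_fn canon_env]
      substitutable_fresh_var[of p c x] that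
    by (simp add: canon_env_def)
  have "a \<in> canon_dom \<longleftrightarrow> (\<exists>c>fmax (All x p). a = eq_class (Var c))" for a
    using eq_var_witness eq_class_eq_iff unfolding canon_dom_def by blast
  then show ?thesis using subst by (auto simp only: eval.simps)
qed

lemma truth_lemma: "eval canon_dom canon_fn canon_env p \<longleftrightarrow> p \<in> H"
proof (induct "size p" arbitrary: p rule: less_induct)
  case less
  show ?case
  proof (cases p)
    case (Eq s t)
    then show ?thesis by (simp add: evalt_canon eq_class_eq_iff)
  next
    case Bot
    then show ?thesis using Bot_notin by simp
  next
    case (Imp q r)
    then show ?thesis using less Imp_in_iff by simp
  next
    case (All x q)
    then show ?thesis using less eval_canon_All All_in_iff All by simp
  qed
qed

end

lemma henkin_extension:
  assumes closed: "\<forall>q\<in>\<Gamma>. fv q = {}" and cons: "consistent (\<Gamma> \<union> set S)"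
  obtains H where "\<Gamma> \<union> set S \<subseteq> H" and "henkin_set H"
proof
  define A where "A n = \<Gamma> \<union> set (henkin_chain S n)" for n
  define H where "H = lindenbaum (\<Union>n. A n)"
  have A_sub: "A n \<subseteq> H" for n
    unfolding H_def using subset_lindenbaum by blast
  then show "\<Gamma> \<union> set S \<subseteq> H"
    unfolding A_def by (metis henkin_chain.simps(1))
  have "mono A"
    using mono_henkin_chain unfolding A_def mono_def by blast
  then have "consistent H"
    unfolding H_def A_def
    by (intro consistent_lindenbaum consistent_Union_chain consistent_henkin_chain[OF cons closed])
  then interpret maximal_consistent H
    by unfold_locales (simp_all only: H_def maximal_lindenbaum)
  show "henkin_set H"
  proof
    fix x p
    define c where "c = fresh_var (henkin_chain S (to_nat (All x p))) (All x p)"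
    assume "Neg (All x p) \<in> H"
    moreover have "henkin_axiom x p c \<in> H"
      using A_sub[of "Suc (to_nat (All x p))"] unfolding A_def c_def by auto
    moreover have "fmax (All x p) < c"
      unfolding c_def by (rule fmax_less_fresh_var) simp
    ultimately show "\<exists>c. fmax (All x p) < c \<and> Neg (subst x (Var c) p) \<in> H"
      using Imp_in_iff unfolding henkin_axiom_def by blast
  qed
qed

theorem completeness:
  assumes closed: "\<forall>q\<in>\<Gamma>. fv q = {}"
    and valid: "\<And>(D::trm set set) F e. (\<forall>f. \<forall>a\<in>D. \<forall>b\<in>D. F f a b \<in> D) \<Longrightarrow> (\<forall>n. e n \<in> D) \<Longrightarrow>
      (\<forall>q\<in>\<Gamma>. eval D F e q) \<Longrightarrow> eval D F e \<phi>"
  shows "\<Gamma> \<turnstile> \<phi>"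
proof (rule ccontr)
  assume "\<not> \<Gamma> \<turnstile> \<phi>"
  then have "consistent (\<Gamma> \<union> set [Neg \<phi>])"
    using by_contradiction unfolding consistent_def by auto
  with closed obtain H where H: "\<Gamma> \<union> set [Neg \<phi>] \<subseteq> H" and "henkin_set H"
    by (rule henkin_extension)
  interpret henkin_set H by fact
  have "\<forall>q\<in>\<Gamma>. eval canon_dom canon_fn canon_env q"
    using H truth_lemma by auto
  then have "eval canon_dom canon_fn canon_env \<phi>"
    by (intro valid) (auto simp: canon_dom_def canon_env_def canon_fn_def)
  then show False
    using H truth_lemma Neg_in_iff by auto
qed

section \<open>Arithmetic in a model of Peano arithmetic\<close>

definition is_neutral :: "'a set \<Rightarrow> (fsym \<Rightarrow> 'a \<Rightarrow> 'a \<Rightarrow> 'a) \<Rightarrow> fsym \<Rightarrow> 'a \<Rightarrow> bool" where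
  "is_neutral D F f z \<longleftrightarrow> (\<forall>a\<in>D. F f a z = a \<and> F f z a = a)"

lemma eval_ZERO [simp]: "eval D F e (ZERO f v) = is_neutral D F f (e v)"
  by (simp add: ZERO_def is_neutral_def)

definition Or :: "form \<Rightarrow> form \<Rightarrow> form" where
  "Or p q = Imp (Neg p) q"

definition Iff :: "form \<Rightarrow> form \<Rightarrow> form" where
  "Iff p q = And (Imp p q) (Imp q p)"

lemma eval_Or [simp]: "eval D F e (Or p q) = (eval D F e p \<or> eval D F e q)"
  by (auto simp: Or_def)

lemma eval_Iff [simp]: "eval D F e (Iff p q) = (eval D F e p \<longleftrightarrow> eval D F e q)"
  by (auto simp: Iff_def)

definition le_fm :: "fsym \<Rightarrow> nat \<Rightarrow> nat \<Rightarrow> nat \<Rightarrow> form" where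
  "le_fm p x z k = Ex k (Eq (Fn p (Var x) (Var k)) (Var z))"

definition lt_fm :: "fsym \<Rightarrow> trm \<Rightarrow> nat \<Rightarrow> nat \<Rightarrow> nat \<Rightarrow> form" where
  "lt_fm p x z one k = Ex k (Eq (Fn p (Fn p x (Var k)) (Var one)) (Var z))"

locale peano_model =
  fixes D :: "'a set" and F :: "fsym \<Rightarrow> 'a \<Rightarrow> 'a \<Rightarrow> 'a" and p m :: fsym
  assumes F_closed [simp]: "\<And>f a b. a \<in> D \<Longrightarrow> b \<in> D \<Longrightarrow> F f a b \<in> D"
    and nonempty: "D \<noteq> {}"
    and PA_valid: "\<And>q e. q \<in> PA p m \<Longrightarrow> \<forall>n. e n \<in> D \<Longrightarrow> eval D F e q"
begin

lemma PA_basic_valid: "q \<in> PA_basic p m \<Longrightarrow> \<forall>n. e n \<in> D \<Longrightarrow> eval D F e q"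
  by (rule PA_valid) (auto simp: PA_def)

lemma neutral_exists: "\<exists>z\<in>D. is_neutral D F p z" "\<exists>z\<in>D. is_neutral D F m z"
proof -
  obtain a where a: "a \<in> D" using nonempty by blast
  have "eval D F (\<lambda>_. a) (Ex 0 (ZERO p 0))"
    using a by (intro PA_basic_valid) (auto simp: PA_basic_def)
  moreover have "eval D F (\<lambda>_. a) (Ex 0 (ZERO m 0))"
    using a by (intro PA_basic_valid) (auto simp: PA_basic_def)
  ultimately
  show "\<exists>z\<in>D. is_neutral D F p z" "\<exists>z\<in>D. is_neutral D F m z" by auto
qed

definition pzero :: 'a where
  "pzero = (SOME z. z \<in> D \<and> is_neutral D F p z)"

definition pone :: 'a where
  "pone = (SOME z. z \<in> D \<and> is_neutral D F m z)"

lemma pzero: "pzero \<in> D" "is_neutral D F p pzero"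
  using someI_ex[of "\<lambda>z. z \<in> D \<and> is_neutral D F p z"] neutral_exists(1)
  unfolding pzero_def by auto

lemma pone: "pone \<in> D" "is_neutral D F m pone"
  using someI_ex[of "\<lambda>z. z \<in> D \<and> is_neutral D F m z"] neutral_exists(2)
  unfolding pone_def by auto

lemma pzero_in [simp]: "pzero \<in> D" and pone_in [simp]: "pone \<in> D"
  using pzero pone by auto

lemma is_neutral_unique:
  "z \<in> D \<Longrightarrow> z' \<in> D \<Longrightarrow> is_neutral D F f z \<Longrightarrow> is_neutral D F f z' \<Longrightarrow> z = z'"
  unfolding is_neutral_def by metis

lemma is_neutral_p_iff [simp]: "z \<in> D \<Longrightarrow> is_neutral D F p z \<longleftrightarrow> z = pzero"
  using is_neutral_unique pzero by blast

lemma is_neutral_m_iff [simp]: "z \<in> D \<Longrightarrow> is_neutral D F m z \<longleftrightarrow> z = pone"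
  using is_neutral_unique pone by blast

abbreviation padd (infixl "\<oplus>" 65) where "a \<oplus> b \<equiv> F p a b"
abbreviation pmul (infixl "\<otimes>" 70) where "a \<otimes> b \<equiv> F m a b"
abbreviation psuc where "psuc a \<equiv> a \<oplus> pone"

lemma add_pzero [simp]: "a \<in> D \<Longrightarrow> a \<oplus> pzero = a" "a \<in> D \<Longrightarrow> pzero \<oplus> a = a"
  using pzero(2) unfolding is_neutral_def by auto

lemma mul_pone [simp]: "a \<in> D \<Longrightarrow> a \<otimes> pone = a" "a \<in> D \<Longrightarrow> pone \<otimes> a = a"
  using pone(2) unfolding is_neutral_def by auto

text \<open>In the formulas given to the induction principles below, \<open>Var 0\<close> and \<open>Var 1\<close> denote
  zero and one.\<close>

definition std_env :: "nat \<Rightarrow> 'a" where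
  "std_env = (\<lambda>_. pzero)(1 := pone)"

lemma std_env [simp]: "std_env 0 = pzero" "std_env 1 = pone" "std_env (Suc 0) = pone"
  "n \<noteq> 1 \<Longrightarrow> std_env n = pzero"
  by (auto simp: std_env_def)

lemma std_env_in: "\<forall>n. std_env n \<in> D"
  by (simp add: std_env_def)

lemma env_upd_in: "\<forall>n. e n \<in> D \<Longrightarrow> a \<in> D \<Longrightarrow> \<forall>n. (e(k:=a)) n \<in> D"
  by simp

lemmas env_in = env_upd_in std_env_in

lemma psuc_neq_pzero [simp]: "a \<in> D \<Longrightarrow> psuc a \<noteq> pzero"
proof -
  assume a: "a \<in> D"
  have "eval D F std_env (All 0 (All 1 (Imp (ZERO p 0) (Imp (ZERO m 1)
        (All 2 (Neg (Eq (Fn p (Var 2) (Var 1)) (Var 0))))))))"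
    by (rule PA_basic_valid[OF _ std_env_in]) (simp add: PA_basic_def)
  then show ?thesis using a by simp
qed

lemma pzero_neq_psuc [simp]: "a \<in> D \<Longrightarrow> pzero \<noteq> psuc a"
  using psuc_neq_pzero by metis

lemma psuc_inject [simp]: "a \<in> D \<Longrightarrow> b \<in> D \<Longrightarrow> psuc a = psuc b \<longleftrightarrow> a = b"
proof
  assume ab: "a \<in> D" "b \<in> D" "psuc a = psuc b"
  have "eval D F std_env (All 1 (Imp (ZERO m 1) (All 2 (All 3
        (Imp (Eq (Fn p (Var 2) (Var 1)) (Fn p (Var 3) (Var 1))) (Eq (Var 2) (Var 3)))))))"
    by (rule PA_basic_valid[OF _ std_env_in]) (simp add: PA_basic_def)
  then show "a = b" using ab by simp
qed simp

lemma add_psuc: "a \<in> D \<Longrightarrow> b \<in> D \<Longrightarrow> a \<oplus> psuc b = psuc (a \<oplus> b)"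
proof -
  assume ab: "a \<in> D" "b \<in> D"
  have "eval D F std_env (All 1 (Imp (ZERO m 1) (All 2 (All 3
        (Eq (Fn p (Var 2) (Fn p (Var 3) (Var 1))) (Fn p (Fn p (Var 2) (Var 3)) (Var 1)))))))"
    by (rule PA_basic_valid[OF _ std_env_in]) (simp add: PA_basic_def)
  then show ?thesis using ab by simp
qed

lemma mul_pzero [simp]: "a \<in> D \<Longrightarrow> a \<otimes> pzero = pzero"
proof -
  assume a: "a \<in> D"
  have "eval D F std_env (All 0 (Imp (ZERO p 0) (All 2 (Eq (Fn m (Var 2) (Var 0)) (Var 0)))))"
    by (rule PA_basic_valid[OF _ std_env_in]) (simp add: PA_basic_def)
  then show ?thesis using a by simp
qed

lemma mul_psuc: "a \<in> D \<Longrightarrow> b \<in> D \<Longrightarrow> a \<otimes> psuc b = a \<otimes> b \<oplus> a"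
proof -
  assume ab: "a \<in> D" "b \<in> D"
  have "eval D F std_env (All 1 (Imp (ZERO m 1) (All 2 (All 3
        (Eq (Fn m (Var 2) (Fn p (Var 3) (Var 1))) (Fn p (Fn m (Var 2) (Var 3)) (Var 2)))))))"
    by (rule PA_basic_valid[OF _ std_env_in]) (simp add: PA_basic_def)
  then show ?thesis using ab by simp
qed

lemma eval_SUCC: "\<forall>n. e n \<in> D \<Longrightarrow> eval D F e (SUCC p m w y) \<longleftrightarrow> e w = psuc (e y)"
proof -
  assume e: "\<forall>n. e n \<in> D"
  define o' where "o' = Suc (max w y)"
  have "o' \<noteq> w" "o' \<noteq> y" unfolding o'_def by auto
  then show ?thesis unfolding SUCC_def Let_def o'_def[symmetric] using e by auto
qed

text \<open>Induction is available only for properties defined by a formula \<open>\<phi>\<close> of the joint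
  vocabulary, with induction variable \<open>y\<close> and parameters taken from \<open>e\<close>; every use therefore
  names such a formula.\<close>

lemma definable_induct:
  assumes e: "\<forall>n. e n \<in> D"
    and defining: "\<And>a. a \<in> D \<Longrightarrow> eval D F (e(y:=a)) \<phi> \<longleftrightarrow> P a"
    and base: "P pzero" and step: "\<And>a. a \<in> D \<Longrightarrow> P a \<Longrightarrow> P (psuc a)"
    and a: "a \<in> D"
  shows "P a"
proof -
  define w where "w = Suc (max y (fmax \<phi>))"
  have w: "w \<noteq> y" "w \<notin> fv \<phi>"
    unfolding w_def using fv_le_fmax by fastforce+
  define base_fm where "base_fm = All y (Imp (ZERO p y) \<phi>)"
  define step_fm where
    "step_fm = All y (Imp \<phi> (All w (Imp (SUCC p m w y) (All y (Imp (Eq (Var y) (Var w)) \<phi>)))))"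
  have "IND p m \<phi> y \<in> PA p m" unfolding PA_def by blast
  from PA_valid[OF this e] have "eval D F e (close (Imp (And base_fm step_fm) (All y \<phi>)))"
    unfolding IND_def Let_def w_def base_fm_def step_fm_def .
  then have ind: "eval D F e (Imp (And base_fm step_fm) (All y \<phi>))"
    by (rule eval_close[OF e])
  have "eval D F e base_fm"
    unfolding base_fm_def using base defining by simp
  moreover have "eval D F e step_fm"
    unfolding step_fm_def
  proof (simp only: eval.simps, intro ballI impI)
    fix c b d
    assume c: "c \<in> D" and "eval D F (e(y:=c)) \<phi>" and b: "b \<in> D"
      and succ: "eval D F (e(y:=c, w:=b)) (SUCC p m w y)" and "d \<in> D"
      and eq: "evalt F (e(y:=c, w:=b, y:=d)) (Var y) = evalt F (e(y:=c, w:=b, y:=d)) (Var w)"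
    then have "P c" using defining by blast
    have "b = psuc c" using succ eval_SUCC[of "e(y:=c, w:=b)"] e c b w by simp
    moreover have "d = b" using eq w by simp
    moreover have "eval D F (e(y:=c, w:=b, y:=d)) \<phi> = eval D F (e(y:=d)) \<phi>"
      by (rule eval_cong) (use w in auto)
    ultimately show "eval D F (e(y:=c, w:=b, y:=d)) \<phi>"
      using defining step[OF c \<open>P c\<close>] c by simp
  qed
  ultimately have "eval D F e (All y \<phi>)"
    using ind by (simp only: eval.simps eval_And simp_thms)
  then show ?thesis using defining a by simp
qed

lemma pzero_or_psuc: "a \<in> D \<Longrightarrow> a = pzero \<or> (\<exists>b\<in>D. a = psuc b)"
  by (rule definable_induct[where e=std_env and y=2 and P="\<lambda>a. a = pzero \<or> (\<exists>b\<in>D. a = psuc b)"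
      and \<phi>="Or (Eq (Var 2) (Var 0)) (Ex 3 (Eq (Var 2) (Fn p (Var 3) (Var 1))))"])
     (auto simp: env_in)

lemma pzero_psuc_cases: "a \<in> D \<Longrightarrow> (a = pzero \<Longrightarrow> P) \<Longrightarrow> (\<And>b. b \<in> D \<Longrightarrow> a = psuc b \<Longrightarrow> P) \<Longrightarrow> P"
  using pzero_or_psuc by blast

lemma add_assoc:
  assumes "a \<in> D" "b \<in> D" "c \<in> D"
  shows "(a \<oplus> b) \<oplus> c = a \<oplus> (b \<oplus> c)"
  by (rule definable_induct[where e="std_env(2:=a,3:=b)" and y=4
      and P="\<lambda>c. (a \<oplus> b) \<oplus> c = a \<oplus> (b \<oplus> c)"
      and \<phi>="Eq (Fn p (Fn p (Var 2) (Var 3)) (Var 4)) (Fn p (Var 2) (Fn p (Var 3) (Var 4)))",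
      OF _ _ _ _ assms(3)])
     (use assms in \<open>auto simp: env_in add_psuc\<close>)

lemma pone_add:
  assumes "a \<in> D"
  shows "pone \<oplus> a = psuc a"
  by (rule definable_induct[where e="std_env" and y=4 and P="\<lambda>a. pone \<oplus> a = psuc a"
      and \<phi>="Eq (Fn p (Var 1) (Var 4)) (Fn p (Var 4) (Var 1))", OF _ _ _ _ assms])
     (auto simp: env_in add_psuc)

lemma add_comm:
  assumes a: "a \<in> D" and b: "b \<in> D"
  shows "a \<oplus> b = b \<oplus> a"
proof (rule definable_induct[where e="std_env(2:=a)" and y=4 and P="\<lambda>b. a \<oplus> b = b \<oplus> a"
      and \<phi>="Eq (Fn p (Var 2) (Var 4)) (Fn p (Var 4) (Var 2))", OF _ _ _ _ b])
  fix b assume b: "b \<in> D" and IH: "a \<oplus> b = b \<oplus> a"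
  have "a \<oplus> psuc b = psuc (a \<oplus> b)" using a b by (rule add_psuc)
  also have "\<dots> = psuc (b \<oplus> a)" using IH by simp
  also have "\<dots> = b \<oplus> psuc a" using a b by (simp add: add_psuc)
  also have "\<dots> = b \<oplus> (pone \<oplus> a)" using a by (simp add: pone_add)
  also have "\<dots> = psuc b \<oplus> a" using a b by (simp add: add_assoc)
  finally show "a \<oplus> psuc b = psuc b \<oplus> a" .
qed (use a in \<open>auto simp: env_in\<close>)

lemma add_lcomm: "a \<in> D \<Longrightarrow> b \<in> D \<Longrightarrow> c \<in> D \<Longrightarrow> a \<oplus> (b \<oplus> c) = b \<oplus> (a \<oplus> c)"
  by (metis add_assoc add_comm)

lemmas add_ac = add_assoc add_comm add_lcomm

lemma add_right_cancel [simp]: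
  assumes "a \<in> D" "b \<in> D" "c \<in> D"
  shows "a \<oplus> c = b \<oplus> c \<longleftrightarrow> a = b"
proof -
  have "\<forall>a\<in>D. \<forall>b\<in>D. a \<oplus> c = b \<oplus> c \<longrightarrow> a = b"
    by (rule definable_induct[where e=std_env and y=4
        and P="\<lambda>c. \<forall>a\<in>D. \<forall>b\<in>D. a \<oplus> c = b \<oplus> c \<longrightarrow> a = b"
        and \<phi>="All 5 (All 6 (Imp (Eq (Fn p (Var 5) (Var 4)) (Fn p (Var 6) (Var 4))) (Eq (Var 5) (Var 6))))",
        OF _ _ _ _ assms(3)])
      (auto simp: env_in add_psuc)
  then show ?thesis using assms by blast
qed

lemma add_left_cancel [simp]: "a \<in> D \<Longrightarrow> b \<in> D \<Longrightarrow> c \<in> D \<Longrightarrow> c \<oplus> a = c \<oplus> b \<longleftrightarrow> a = b"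
  using add_right_cancel add_comm by metis

lemma add_cancel_left_right [simp]: "a \<in> D \<Longrightarrow> c \<in> D \<Longrightarrow> a \<oplus> c = a \<longleftrightarrow> c = pzero"
  using add_left_cancel[of c pzero a] by simp

lemma add_cancel_right_right [simp]: "a \<in> D \<Longrightarrow> c \<in> D \<Longrightarrow> a = a \<oplus> c \<longleftrightarrow> c = pzero"
  using add_cancel_left_right by metis

lemma add_cancel_left_left [simp]: "a \<in> D \<Longrightarrow> c \<in> D \<Longrightarrow> c \<oplus> a = a \<longleftrightarrow> c = pzero"
  using add_right_cancel[of c pzero a] by simp

lemma pone_neq_pzero [simp]: "pone \<noteq> pzero" "pzero \<noteq> pone"
  using psuc_neq_pzero[of pzero] by auto

lemma add_eq_pzero_iff:
  assumes "a \<in> D" "b \<in> D"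
  shows "a \<oplus> b = pzero \<longleftrightarrow> a = pzero \<and> b = pzero"
proof
  assume ab: "a \<oplus> b = pzero"
  have "b = pzero"
  proof (rule pzero_psuc_cases[OF assms(2)])
    fix c assume "c \<in> D" "b = psuc c"
    then have "a \<oplus> b = psuc (a \<oplus> c)" using assms by (simp add: add_psuc)
    then show ?thesis using ab \<open>c \<in> D\<close> assms by simp
  qed
  then show "a = pzero \<and> b = pzero" using ab assms by simp
qed (use assms in simp)

lemma mul_pzero_left [simp]:
  assumes "a \<in> D"
  shows "pzero \<otimes> a = pzero"
  by (rule definable_induct[where e="std_env" and y=4 and P="\<lambda>a. pzero \<otimes> a = pzero"
      and \<phi>="Eq (Fn m (Var 0) (Var 4)) (Var 0)", OF _ _ _ _ assms])
     (auto simp: env_in mul_psuc)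

lemma distrib_left:
  assumes "a \<in> D" "b \<in> D" "c \<in> D"
  shows "a \<otimes> (b \<oplus> c) = a \<otimes> b \<oplus> a \<otimes> c"
proof (rule definable_induct[where e="std_env(2:=a,3:=b)" and y=4
    and P="\<lambda>c. a \<otimes> (b \<oplus> c) = a \<otimes> b \<oplus> a \<otimes> c"
      and \<phi>="Eq (Fn m (Var 2) (Fn p (Var 3) (Var 4))) (Fn p (Fn m (Var 2) (Var 3)) (Fn m (Var 2) (Var 4)))",
      OF _ _ _ _ assms(3)])
  fix c assume c: "c \<in> D" and IH: "a \<otimes> (b \<oplus> c) = a \<otimes> b \<oplus> a \<otimes> c"
  have "a \<otimes> (b \<oplus> psuc c) = a \<otimes> psuc (b \<oplus> c)"
    using assms c by (simp add: add_psuc)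
  also have "\<dots> = a \<otimes> (b \<oplus> c) \<oplus> a" using assms c by (simp add: mul_psuc)
  also have "\<dots> = (a \<otimes> b \<oplus> a \<otimes> c) \<oplus> a" using IH by simp
  also have "\<dots> = a \<otimes> b \<oplus> (a \<otimes> c \<oplus> a)"
    using assms c by (simp add: add_assoc)
  also have "\<dots> = a \<otimes> b \<oplus> a \<otimes> psuc c"
    using assms c by (simp add: mul_psuc)
  finally show "a \<otimes> (b \<oplus> psuc c) = a \<otimes> b \<oplus> a \<otimes> psuc c" .
qed (use assms in \<open>auto simp: env_in\<close>)

lemma mul_psuc_left:
  assumes "a \<in> D" "b \<in> D"
  shows "(psuc b) \<otimes> a = b \<otimes> a \<oplus> a"
proof (rule definable_induct[where e="std_env(2:=b)" and y=4
    and P="\<lambda>a. (psuc b) \<otimes> a = b \<otimes> a \<oplus> a"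
      and \<phi>="Eq (Fn m (Fn p (Var 2) (Var 1)) (Var 4)) (Fn p (Fn m (Var 2) (Var 4)) (Var 4))",
      OF _ _ _ _ assms(1)])
  fix a assume a: "a \<in> D" and IH: "(psuc b) \<otimes> a = b \<otimes> a \<oplus> a"
  have "(psuc b) \<otimes> psuc a = (psuc b) \<otimes> a \<oplus> psuc b"
    using assms a by (simp add: mul_psuc)
  also have "\<dots> = (b \<otimes> a \<oplus> a) \<oplus> (b \<oplus> pone)" using IH by simp
  also have "\<dots> = (b \<otimes> a \<oplus> b) \<oplus> (a \<oplus> pone)"
    using assms a by (simp add: add_ac)
  also have "\<dots> = b \<otimes> psuc a \<oplus> psuc a" using assms a by (simp add: mul_psuc)
  finally show "(psuc b) \<otimes> psuc a = b \<otimes> psuc a \<oplus> psuc a" .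
qed (use assms in \<open>auto simp: env_in\<close>)

lemma mul_comm:
  assumes "a \<in> D" "b \<in> D"
  shows "a \<otimes> b = b \<otimes> a"
proof (rule definable_induct[where e="std_env(2:=a)" and y=4 and P="\<lambda>b. a \<otimes> b = b \<otimes> a"
      and \<phi>="Eq (Fn m (Var 2) (Var 4)) (Fn m (Var 4) (Var 2))", OF _ _ _ _ assms(2)])
  fix b assume b: "b \<in> D" and IH: "a \<otimes> b = b \<otimes> a"
  show "a \<otimes> psuc b = psuc b \<otimes> a"
    using assms b IH by (simp add: mul_psuc mul_psuc_left)
qed (use assms in \<open>auto simp: env_in\<close>)

lemma distrib_right: "a \<in> D \<Longrightarrow> b \<in> D \<Longrightarrow> c \<in> D \<Longrightarrow> (b \<oplus> c) \<otimes> a = b \<otimes> a \<oplus> c \<otimes> a"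
  by (metis distrib_left mul_comm F_closed)

lemma mul_assoc:
  assumes "a \<in> D" "b \<in> D" "c \<in> D"
  shows "(a \<otimes> b) \<otimes> c = a \<otimes> (b \<otimes> c)"
proof (rule definable_induct[where e="std_env(2:=a,3:=b)" and y=4
    and P="\<lambda>c. (a \<otimes> b) \<otimes> c = a \<otimes> (b \<otimes> c)"
      and \<phi>="Eq (Fn m (Fn m (Var 2) (Var 3)) (Var 4)) (Fn m (Var 2) (Fn m (Var 3) (Var 4)))",
      OF _ _ _ _ assms(3)])
  fix c assume c: "c \<in> D" and IH: "(a \<otimes> b) \<otimes> c = a \<otimes> (b \<otimes> c)"
  show "(a \<otimes> b) \<otimes> psuc c = a \<otimes> (b \<otimes> psuc c)"
    using assms c IH by (simp add: mul_psuc distrib_left)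
qed (use assms in \<open>auto simp: env_in\<close>)

lemma mul_lcomm: "a \<in> D \<Longrightarrow> b \<in> D \<Longrightarrow> c \<in> D \<Longrightarrow> a \<otimes> (b \<otimes> c) = b \<otimes> (a \<otimes> c)"
  by (metis mul_assoc mul_comm)

lemmas mul_ac = mul_assoc mul_comm mul_lcomm

lemma mul_eq_pzero_iff:
  assumes "a \<in> D" "b \<in> D"
  shows "a \<otimes> b = pzero \<longleftrightarrow> a = pzero \<or> b = pzero"
proof
  assume ab: "a \<otimes> b = pzero"
  show "a = pzero \<or> b = pzero"
  proof (rule pzero_psuc_cases[OF assms(1)], simp)
    fix a' assume a': "a' \<in> D" "a = psuc a'"
    show ?thesis
    proof (rule pzero_psuc_cases[OF assms(2)], simp)
      fix b' assume b': "b' \<in> D" "b = psuc b'"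
      have "a \<otimes> b = psuc (a \<otimes> b' \<oplus> a')"
        using a' b' by (simp add: mul_psuc add_psuc)
      then show ?thesis using ab a' b' by simp
    qed
  qed
qed (use assms in auto)

definition le :: "'a \<Rightarrow> 'a \<Rightarrow> bool" where
  "le a b \<longleftrightarrow> (\<exists>c\<in>D. a \<oplus> c = b)"
definition lt :: "'a \<Rightarrow> 'a \<Rightarrow> bool" where
  "lt a b \<longleftrightarrow> (\<exists>c\<in>D. psuc (a \<oplus> c) = b)"

lemma eval_le_fm [simp]: "k \<noteq> x \<Longrightarrow> k \<noteq> z \<Longrightarrow> eval D F e (le_fm p x z k) = le (e x) (e z)"
  by (simp add: le_fm_def le_def)
lemma eval_lt_fm [simp]:
  assumes "k \<notin> tvars x" "k \<noteq> z" "k \<noteq> one" "e one = pone"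
  shows "eval D F e (lt_fm p x z one k) = lt (evalt F e x) (e z)"
proof -
  have "\<And>c. evalt F (e(k:=c)) x = evalt F e x" using assms by (intro evalt_cong) auto
  then show ?thesis using assms by (simp add: lt_fm_def lt_def)
qed

lemma le_refl [simp]: "a \<in> D \<Longrightarrow> le a a"
  unfolding le_def by (rule bexI[of _ pzero]) auto
lemma pzero_le [simp]: "a \<in> D \<Longrightarrow> le pzero a" unfolding le_def by auto
lemma le_add [simp]: "a \<in> D \<Longrightarrow> c \<in> D \<Longrightarrow> le a (a \<oplus> c)"
  unfolding le_def by auto
lemma le_add2 [simp]: "a \<in> D \<Longrightarrow> c \<in> D \<Longrightarrow> le a (c \<oplus> a)"
  unfolding le_def using add_comm by auto
lemma le_trans: "le a b \<Longrightarrow> le b c \<Longrightarrow> a \<in> D \<Longrightarrow> le a c"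
  unfolding le_def by (metis add_assoc F_closed)

lemma lt_imp_psuc_le: "lt a b \<Longrightarrow> a \<in> D \<Longrightarrow> le (psuc a) b"
  unfolding lt_def le_def by (metis add_assoc add_comm F_closed pone_in)
lemma psuc_le_imp_lt: "le (psuc a) b \<Longrightarrow> a \<in> D \<Longrightarrow> lt a b"
  unfolding lt_def le_def by (metis add_assoc add_comm F_closed pone_in)

lemma lt_imp_le: "lt a b \<Longrightarrow> a \<in> D \<Longrightarrow> le a b"
  unfolding lt_def le_def using add_psuc by (metis F_closed pone_in)

lemma lt_iff:
  assumes "a \<in> D" "b \<in> D"
  shows "lt a b \<longleftrightarrow> le a b \<and> a \<noteq> b"
proof
  assume "lt a b"
  then obtain c where c: "c \<in> D" "psuc (a \<oplus> c) = b" unfolding lt_def by blast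
  then have "a \<oplus> psuc c = b" using assms by (simp add: add_psuc)
  then show "le a b \<and> a \<noteq> b" unfolding le_def using c assms by auto
next
  assume "le a b \<and> a \<noteq> b"
  then obtain c where c: "c \<in> D" "a \<oplus> c = b" "a \<noteq> b" unfolding le_def by auto
  then have "c \<noteq> pzero" using assms by auto
  then obtain c' where "c' \<in> D" "c = psuc c'" using pzero_or_psuc c by blast
  then show "lt a b" unfolding lt_def using c assms by (auto simp: add_psuc)
qed

lemma lt_irrefl [simp]: "a \<in> D \<Longrightarrow> \<not> lt a a" using lt_iff by blast
lemma not_lt_pzero [simp]: "a \<in> D \<Longrightarrow> \<not> lt a pzero" unfolding lt_def by auto

lemma le_pzero_iff [simp]: "a \<in> D \<Longrightarrow> le a pzero \<longleftrightarrow> a = pzero"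
  unfolding le_def using add_eq_pzero_iff by auto

lemma lt_psuc_iff:
  assumes "a \<in> D" "b \<in> D"
  shows "lt a (psuc b) \<longleftrightarrow> le a b"
  unfolding lt_def le_def using assms by auto

lemma le_psuc_iff:
  assumes "a \<in> D" "b \<in> D"
  shows "le a (psuc b) \<longleftrightarrow> le a b \<or> a = psuc b"
  using lt_psuc_iff[OF assms] lt_iff[OF assms(1)] assms by auto

lemma pzero_lt_iff: "a \<in> D \<Longrightarrow> lt pzero a \<longleftrightarrow> a \<noteq> pzero"
  using lt_iff by auto

lemma lt_psuc_self [simp]: "a \<in> D \<Longrightarrow> lt a (psuc a)" using lt_psuc_iff by simp

lemma le_total:
  assumes "a \<in> D"
  shows "\<forall>b\<in>D. le a b \<or> le b a"
proof (rule definable_induct[where e="std_env" and y=4 and P="\<lambda>a. \<forall>b\<in>D. le a b \<or> le b a"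
      and \<phi>="All 5 (Or (le_fm p 4 5 6) (le_fm p 5 4 6))", OF _ _ _ _ assms])
  fix a assume a: "a \<in> D" and IH: "\<forall>b\<in>D. le a b \<or> le b a"
  show "\<forall>b\<in>D. le (psuc a) b \<or> le b (psuc a)"
  proof
    fix b assume b: "b \<in> D"
    show "le (psuc a) b \<or> le b (psuc a)"
    proof (cases "le b a")
      case True then show ?thesis using a b le_trans[of b a "psuc a"] by simp
    next
      case False
      then have "le a b" using IH b by blast
      then have "lt a b \<or> a = b" using lt_iff a b by auto
      then show ?thesis using lt_imp_psuc_le a b by auto
    qed
  qed
qed (auto simp: env_in)

lemma lt_trichotomy: "a \<in> D \<Longrightarrow> b \<in> D \<Longrightarrow> lt a b \<or> a = b \<or> lt b a"
  using le_total lt_iff by blast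

lemma lt_le_trans: "lt a b \<Longrightarrow> le b c \<Longrightarrow> a \<in> D \<Longrightarrow> lt a c"
  using lt_imp_psuc_le psuc_le_imp_lt le_trans by (meson F_closed pone_in)
lemma le_lt_trans: "le a b \<Longrightarrow> lt b c \<Longrightarrow> a \<in> D \<Longrightarrow> b \<in> D \<Longrightarrow> lt a c"
proof -
  assume "le a b" "lt b c" "a \<in> D" "b \<in> D"
  then have "le (psuc b) c" using lt_imp_psuc_le by blast
  moreover have "le (psuc a) (psuc b)"
    using \<open>le a b\<close> \<open>a \<in> D\<close> \<open>b \<in> D\<close> unfolding le_def
    by (metis add_assoc add_comm pone_in)
  ultimately show "lt a c"
    using psuc_le_imp_lt le_trans \<open>a \<in> D\<close> by (meson F_closed pone_in)
qed

lemma add_le_mono: "le a b \<Longrightarrow> c \<in> D \<Longrightarrow> a \<in> D \<Longrightarrow> le (a \<oplus> c) (b \<oplus> c)"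
  unfolding le_def by (metis add_assoc add_comm)
lemma add_lt_mono: "lt a b \<Longrightarrow> c \<in> D \<Longrightarrow> a \<in> D \<Longrightarrow> lt (a \<oplus> c) (b \<oplus> c)"
  unfolding lt_def by (metis add_assoc add_comm F_closed pone_in)

lemma mul_le_mono: "le a b \<Longrightarrow> c \<in> D \<Longrightarrow> a \<in> D \<Longrightarrow> le (a \<otimes> c) (b \<otimes> c)"
  unfolding le_def by (metis distrib_right F_closed)
lemma mul_le_mono2: "le a b \<Longrightarrow> c \<in> D \<Longrightarrow> a \<in> D \<Longrightarrow> le (c \<otimes> a) (c \<otimes> b)"
  unfolding le_def by (metis distrib_left F_closed)

lemma le_pone_iff: "a \<in> D \<Longrightarrow> le a pone \<longleftrightarrow> a = pzero \<or> a = pone"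
  using le_psuc_iff[of a pzero] by auto

lemma mul_eq_pone:
  assumes "a \<otimes> b = pone" "a \<in> D" "b \<in> D"
  shows "a = pone"
proof -
  have "b \<noteq> pzero" using assms by auto
  then obtain b' where b': "b' \<in> D" "b = psuc b'" using pzero_or_psuc assms by blast
  then have "a \<otimes> b = a \<otimes> b' \<oplus> a" using assms by (simp add: mul_psuc)
  then have "le a pone" using assms b' le_add2[of a "a \<otimes> b'"] by simp
  moreover have "a \<noteq> pzero" using assms by auto
  ultimately show ?thesis using le_pone_iff assms by auto
qed

lemma definable_less_induct:
  assumes e: "\<forall>n. e n \<in> D"
  and ev: "\<And>a. a \<in> D \<Longrightarrow> eval D F (e(y:=a)) \<phi> = P a"
  and step: "\<And>a. a \<in> D \<Longrightarrow> (\<And>b. b \<in> D \<Longrightarrow> lt b a \<Longrightarrow> P b) \<Longrightarrow> P a"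
  and a: "a \<in> D"
  shows "P a"
proof -
  define n where "n = Suc (max y (fmax \<phi>))"
  define k where "k = n + 1"
  define o' where "o' = n + 2"
  have neq: "n \<noteq> y" "y \<noteq> n" "k \<noteq> y" "y \<noteq> k" "o' \<noteq> y" "y \<noteq> o'" "k \<noteq> n" "n \<noteq> k"
    "o' \<noteq> n" "n \<noteq> o'" "k \<noteq> o'" "o' \<noteq> k"
    unfolding n_def k_def o'_def by auto
  have nf: "n \<notin> fv \<phi>" unfolding n_def using fv_le_fmax by fastforce
  define \<psi> where "\<psi> = All y (Imp (Ex k (Ex o' (And (ZERO m o')
      (Eq (Fn p (Fn p (Var y) (Var k)) (Var o')) (Var n))))) \<phi>)"
  have evpsi: "eval D F (e(n:=c)) \<psi> = (\<forall>b\<in>D. lt b c \<longrightarrow> P b)" if c: "c \<in> D" for c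
  proof -
    have "eval D F (e(n:=c)) \<psi> = (\<forall>b\<in>D. lt b c \<longrightarrow> eval D F (e(n:=c, y:=b)) \<phi>)"
      unfolding \<psi>_def lt_def using neq by (simp add: Bex_def conj_commute)
    also have "\<dots> = (\<forall>b\<in>D. lt b c \<longrightarrow> eval D F (e(y:=b)) \<phi>)"
    proof -
      have "\<And>b. eval D F (e(n:=c, y:=b)) \<phi> = eval D F (e(y:=b)) \<phi>"
        by (rule eval_cong) (use nf in auto)
      then show ?thesis by simp
    qed
    also have "\<dots> = (\<forall>b\<in>D. lt b c \<longrightarrow> P b)" using ev by simp
    finally show ?thesis .
  qed
  have "\<forall>b\<in>D. lt b (psuc a) \<longrightarrow> P b"
  proof (rule definable_induct[where e=e and y=n and P="\<lambda>c. \<forall>b\<in>D. lt b c \<longrightarrow> P b" and \<phi>=\<psi>])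
    fix c assume c: "c \<in> D" and IH: "\<forall>b\<in>D. lt b c \<longrightarrow> P b"
    show "\<forall>b\<in>D. lt b (psuc c) \<longrightarrow> P b"
    proof (intro ballI impI)
      fix b assume b: "b \<in> D" and "lt b (psuc c)"
      then have "lt b c \<or> b = c" using lt_psuc_iff lt_iff c by auto
      then show "P b" using IH step c b by auto
    qed
  qed (use e evpsi a in auto)
  then show ?thesis using a by simp
qed

lemma definable_least:
  assumes e: "\<forall>n. e n \<in> D"
  and ev: "\<And>a. a \<in> D \<Longrightarrow> eval D F (e(y:=a)) \<phi> = P a"
  and Pa: "P a" and a: "a \<in> D"
  shows "\<exists>b\<in>D. P b \<and> (\<forall>c\<in>D. lt c b \<longrightarrow> \<not> P c)"
proof (rule ccontr)
  assume no: "\<not> ?thesis"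
  have "\<not> P a"
  proof (rule definable_less_induct[where e=e and y=y and \<phi>="Neg \<phi>" and P="\<lambda>a. \<not> P a"])
    fix a assume "a \<in> D" "\<And>b. b \<in> D \<Longrightarrow> lt b a \<Longrightarrow> \<not> P b"
    then show "\<not> P a" using no by blast
  qed (use e ev a in auto)
  then show False using Pa by simp
qed

lemma div_mod_exists:
  assumes d: "d \<in> D" "d \<noteq> pzero" and a: "a \<in> D"
  shows "\<exists>q\<in>D. \<exists>r\<in>D. a = q \<otimes> d \<oplus> r \<and> lt r d"
proof (rule definable_induct[where e="std_env(3:=d)" and y=4
    and P="\<lambda>a. \<exists>q\<in>D. \<exists>r\<in>D. a = q \<otimes> d \<oplus> r \<and> lt r d"
    and \<phi>="Ex 5 (Ex 6 (And (Eq (Var 4) (Fn p (Fn m (Var 5) (Var 3)) (Var 6))) (lt_fm p (Var 6) 3 1 7)))",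
    OF _ _ _ _ a])
  fix a assume a: "a \<in> D" and IH: "\<exists>q\<in>D. \<exists>r\<in>D. a = q \<otimes> d \<oplus> r \<and> lt r d"
  then obtain q r where qr: "q \<in> D" "r \<in> D" "a = q \<otimes> d \<oplus> r" "lt r d" by blast
  have Sa: "psuc a = q \<otimes> d \<oplus> psuc r" using qr d by (simp add: add_psuc)
  have "le (psuc r) d" using qr lt_imp_psuc_le by blast
  then have "lt (psuc r) d \<or> psuc r = d" using lt_iff qr d by auto
  then show "\<exists>q\<in>D. \<exists>r\<in>D. psuc a = q \<otimes> d \<oplus> r \<and> lt r d"
  proof
    assume "lt (psuc r) d" then show ?thesis
      using Sa qr by (intro bexI[of _ q] bexI[of _ "psuc r"]) auto
  next
    assume "psuc r = d"
    then have "psuc a = (psuc q) \<otimes> d \<oplus> pzero"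
      using Sa qr d by (simp add: mul_psuc_left)
    moreover have "lt pzero d" using d pzero_lt_iff by auto
    ultimately show ?thesis using qr by (intro bexI[of _ "psuc q"] bexI[of _ pzero]) auto
  qed
next
  show "\<exists>q\<in>D. \<exists>r\<in>D. pzero = q \<otimes> d \<oplus> r \<and> lt r d"
    using d pzero_lt_iff by (intro bexI[of _ pzero]) auto
qed (use d in \<open>auto simp: env_in\<close>)

end

section \<open>Coding finite sets\<close>

definition coded_fm :: "fsym \<Rightarrow> fsym \<Rightarrow> trm \<Rightarrow> nat \<Rightarrow> nat \<Rightarrow> nat \<Rightarrow> nat \<Rightarrow> nat \<Rightarrow> form" where
  "coded_fm p m x c d b one k = And (lt_fm p x b one k)
     (Ex k (Eq (Var c) (Fn m (Fn p (Fn m (Fn p x (Var one)) (Var d)) (Var one)) (Var k))))"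

definition divisible_upto_fm :: "fsym \<Rightarrow> fsym \<Rightarrow> nat \<Rightarrow> nat \<Rightarrow> nat \<Rightarrow> nat \<Rightarrow> nat \<Rightarrow> form" where
  "divisible_upto_fm p m d b z k k2 = And (Neg (Eq (Var d) (Var z)))
     (All k (Imp (And (Neg (Eq (Var k) (Var z))) (le_fm p k b k2))
       (Ex k2 (Eq (Var d) (Fn m (Var k) (Var k2))))))"

context peano_model
begin

definition divides :: "'a \<Rightarrow> 'a \<Rightarrow> bool" where
  "divides a b \<longleftrightarrow> (\<exists>k\<in>D. b = a \<otimes> k)"

lemma divides_refl [simp]: "a \<in> D \<Longrightarrow> divides a a"
  unfolding divides_def by (rule bexI[of _ pone]) auto
lemma divides_pzero [simp]: "a \<in> D \<Longrightarrow> divides a pzero"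
  unfolding divides_def by (rule bexI[of _ pzero]) auto
lemma pone_divides [simp]: "a \<in> D \<Longrightarrow> divides pone a"
  unfolding divides_def by (rule bexI[of _ a]) auto
lemma divides_trans: "divides a b \<Longrightarrow> divides b c \<Longrightarrow> a \<in> D \<Longrightarrow> divides a c"
  unfolding divides_def by (metis mul_assoc F_closed)
lemma divides_mult: "divides a b \<Longrightarrow> c \<in> D \<Longrightarrow> a \<in> D \<Longrightarrow> divides a (b \<otimes> c)"
  unfolding divides_def by (metis mul_assoc F_closed)
lemma divides_mult_left: "a \<in> D \<Longrightarrow> c \<in> D \<Longrightarrow> divides a (c \<otimes> a)"
  unfolding divides_def by (metis mul_comm)
lemma divides_add_right_cancel:
  assumes "divides a b" "divides a (b \<oplus> c)" "a \<in> D" "b \<in> D" "c \<in> D"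
  shows "divides a c"
proof -
  obtain k l where kl: "k \<in> D" "l \<in> D" "b = a \<otimes> k" "b \<oplus> c = a \<otimes> l"
    using assms unfolding divides_def by blast
  have "le k l \<or> le l k" using le_total kl by blast
  then show ?thesis
  proof
    assume "le k l"
    then obtain j where j: "j \<in> D" "l = k \<oplus> j" unfolding le_def by blast
    then have "b \<oplus> c = b \<oplus> a \<otimes> j" using kl assms by (simp add: distrib_left)
    then show ?thesis unfolding divides_def using j assms by auto
  next
    assume "le l k"
    then obtain j where j: "j \<in> D" "k = l \<oplus> j" unfolding le_def by blast
    then have "b = (b \<oplus> c) \<oplus> a \<otimes> j" using kl assms by (simp add: distrib_left)
    then have "b \<oplus> (c \<oplus> a \<otimes> j) = b" using assms j by (simp add: add_assoc)
    then have "c = pzero" using assms j add_eq_pzero_iff by simp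
    then show ?thesis using assms by simp
  qed
qed

lemma divides_pone: "divides a pone \<Longrightarrow> a \<in> D \<Longrightarrow> a = pone"
  unfolding divides_def using mul_eq_pone by metis

definition rel_prime :: "'a \<Rightarrow> 'a \<Rightarrow> bool" where
  "rel_prime u v \<longleftrightarrow> (\<forall>f\<in>D. divides f u \<and> divides f v \<longrightarrow> f = pone)"

text \<open>Without a gcd at hand: the least positive \<open>s\<close> with \<open>u\<close> dividing \<open>w s\<close> divides every such
  \<open>t\<close> (division with remainder), in particular \<open>u\<close> and \<open>v\<close>, so \<open>s = 1\<close>.\<close>

lemma rel_prime_divides_mult:
  assumes uvw: "u \<in> D" "v \<in> D" "w \<in> D" and cp: "rel_prime u v" and d: "divides u (w \<otimes> v)"
  shows "divides u w"
proof (cases "v = pzero")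
  case True
  then have "u = pone" using cp uvw unfolding rel_prime_def by auto
  then show ?thesis using uvw by simp
next
  case False
  let ?X = "\<lambda>s. s \<noteq> pzero \<and> divides u (w \<otimes> s)"
  have "\<exists>b\<in>D. ?X b \<and> (\<forall>c\<in>D. lt c b \<longrightarrow> \<not> ?X c)"
    by (rule definable_least[where e="std_env(2:=w,3:=u)" and y=4 and a=v
        and \<phi>="And (Neg (Eq (Var 4) (Var 0)))
          (Ex 5 (Eq (Fn m (Var 2) (Var 4)) (Fn m (Var 3) (Var 5))))"])
      (use uvw d False in \<open>auto simp: env_in divides_def\<close>)
  then obtain s where s: "s \<in> D" "s \<noteq> pzero" "divides u (w \<otimes> s)"
    and min: "\<forall>c\<in>D. lt c s \<longrightarrow> \<not> ?X c"
    by blast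
  have claim: "divides s t" if t: "t \<in> D" "divides u (w \<otimes> t)" for t
  proof -
    obtain q r where qr: "q \<in> D" "r \<in> D" "t = q \<otimes> s \<oplus> r" "lt r s"
      using div_mod_exists s t by blast
    have "w \<otimes> t = (w \<otimes> s) \<otimes> q \<oplus> w \<otimes> r"
      using qr s uvw by (simp add: distrib_left mul_ac)
    moreover have "divides u ((w \<otimes> s) \<otimes> q)" using divides_mult s qr uvw by simp
    ultimately have "divides u (w \<otimes> r)"
      using divides_add_right_cancel[of u "(w \<otimes> s) \<otimes> q" "w \<otimes> r"] t qr s uvw by simp
    then have "r = pzero" using min qr by auto
    then show "divides s t"
      using qr s unfolding divides_def by (metis mul_comm add_pzero(1) F_closed)
  qed
  have "divides s u" using claim uvw divides_mult_left by simp
  moreover have "divides s v" using claim uvw d by simp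
  ultimately have "s = pone" using cp s unfolding rel_prime_def by blast
  then show ?thesis using s uvw by simp
qed

lemma rel_prime_sym: "rel_prime u v \<Longrightarrow> rel_prime v u"
  unfolding rel_prime_def by blast

text \<open>Goedel's \<open>\<beta>\<close>-function: if \<open>d\<close> is divisible by all \<open>0 < k \<le> b\<close>, the moduli
  \<open>1 + (x + 1) d\<close> with \<open>x < b\<close> are pairwise relatively prime, so any set of numbers below \<open>b\<close>
  is the set of \<open>x < b\<close> whose modulus divides a suitable product \<open>c\<close>.\<close>

definition modulus :: "'a \<Rightarrow> 'a \<Rightarrow> 'a" where
  "modulus x d = psuc ((psuc x) \<otimes> d)"
lemma modulus_in [simp]: "x \<in> D \<Longrightarrow> d \<in> D \<Longrightarrow> modulus x d \<in> D"
  unfolding modulus_def by simp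

lemma rel_prime_modulus_base:
  assumes "x \<in> D" "d \<in> D"
  shows "rel_prime (modulus x d) d"
  unfolding rel_prime_def
proof (intro ballI impI)
  fix f assume f: "f \<in> D" "divides f (modulus x d) \<and> divides f d"
  then have "divides f ((psuc x) \<otimes> d)"
    using assms divides_mult_left divides_trans by (metis F_closed pone_in)
  then have "divides f pone" using divides_add_right_cancel[of f "(psuc x) \<otimes> d" pone] f assms
    unfolding modulus_def by simp
  then show "f = pone" using divides_pone f by simp
qed

definition divisible_upto :: "'a \<Rightarrow> 'a \<Rightarrow> bool" where
  "divisible_upto d b \<longleftrightarrow>
     d \<in> D \<and> d \<noteq> pzero \<and> (\<forall>k\<in>D. k \<noteq> pzero \<and> le k b \<longrightarrow> divides k d)"

lemma rel_prime_moduli_less: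
  assumes div: "divisible_upto d b" and xa: "x \<in> D" "a \<in> D" "lt a b" "lt x a"
  shows "rel_prime (modulus x d) (modulus a d)"
  unfolding rel_prime_def
proof (intro ballI impI)
  have d: "d \<in> D" "d \<noteq> pzero" using div unfolding divisible_upto_def by auto
  obtain c where c: "c \<in> D" "psuc (x \<oplus> c) = a" using xa unfolding lt_def by blast
  define t where "t = psuc c"
  have t: "t \<in> D" "t \<noteq> pzero" "a = x \<oplus> t"
    using c xa unfolding t_def by (auto simp: add_psuc)
  have "le t a" using t xa by simp
  then have "le t b" using xa lt_imp_le le_trans t by blast
  then have tdv: "divides t d" using div t unfolding divisible_upto_def by blast
  have mma: "modulus a d = modulus x d \<oplus> t \<otimes> d"
    using t xa d unfolding modulus_def by (simp add: distrib_right add_ac)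
  fix f assume f: "f \<in> D" "divides f (modulus x d) \<and> divides f (modulus a d)"
  then have "divides f (t \<otimes> d)"
    using divides_add_right_cancel[of f "modulus x d" "t \<otimes> d"] mma t d xa by simp
  moreover have "rel_prime f d" unfolding rel_prime_def
  proof (intro ballI impI)
    fix g assume "g \<in> D" "divides g f \<and> divides g d"
    then have "divides g (modulus x d)" "divides g d" using divides_trans f by blast+
    then show "g = pone"
      using rel_prime_modulus_base[OF xa(1) d(1)] \<open>g \<in> D\<close> unfolding rel_prime_def by blast
  qed
  ultimately have "divides f t" using rel_prime_divides_mult[of f d t] f t d by simp
  then have "divides f d" using divides_trans tdv f by blast
  then show "f = pone"
    using f rel_prime_modulus_base[OF xa(1) d(1)] unfolding rel_prime_def by blast
qed

lemma rel_prime_moduli: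
  assumes div: "divisible_upto d b" and xa: "x \<in> D" "a \<in> D" "lt x b" "lt a b" "x \<noteq> a"
  shows "rel_prime (modulus x d) (modulus a d)"
  using lt_trichotomy[OF xa(1,2)] rel_prime_moduli_less[OF div] rel_prime_sym xa by metis

lemma divisible_upto_D: "divisible_upto d b \<Longrightarrow> d \<in> D" "divisible_upto d b \<Longrightarrow> d \<noteq> pzero"
  unfolding divisible_upto_def by auto

lemma divisible_upto_pzero: "divisible_upto pone pzero"
  unfolding divisible_upto_def by auto

lemma eval_divisible_upto_fm:
  assumes "\<forall>n. e n \<in> D" "e z = pzero" "k \<noteq> d" "k \<noteq> b" "k \<noteq> z" "k2 \<noteq> d" "k2 \<noteq> k" "k2 \<noteq> b"
  shows "eval D F e (divisible_upto_fm p m d b z k k2) = divisible_upto (e d) (e b)"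
  using assms by (simp add: divisible_upto_fm_def divisible_upto_def divides_def)

lemma divisible_upto_exists:
  assumes "b \<in> D"
  shows "\<exists>d. divisible_upto d b"
proof (rule definable_induct[where e=std_env and y=4 and P="\<lambda>b. \<exists>d. divisible_upto d b"
    and \<phi>="Ex 5 (divisible_upto_fm p m 5 4 0 6 7)", OF _ _ _ _ assms])
  fix b
  assume b: "b \<in> D" and "\<exists>d. divisible_upto d b"
  then obtain d where d: "divisible_upto d b" by blast
  have "divisible_upto (d \<otimes> psuc b) (psuc b)"
    unfolding divisible_upto_def
  proof (intro conjI ballI impI)
    show "d \<otimes> psuc b \<in> D" "d \<otimes> psuc b \<noteq> pzero"
      using d b mul_eq_pzero_iff divisible_upto_D by auto
    fix k
    assume k: "k \<in> D" "k \<noteq> pzero \<and> le k (psuc b)"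
    then have "le k b \<or> k = psuc b" using le_psuc_iff b by blast
    then show "divides k (d \<otimes> psuc b)"
      using d k b divides_mult divides_mult_left unfolding divisible_upto_def by auto
  qed
  then show "\<exists>d. divisible_upto d (psuc b)" by blast
qed (auto simp: env_in eval_divisible_upto_fm intro: divisible_upto_pzero dest: divisible_upto_D)

definition coded :: "'a \<Rightarrow> 'a \<Rightarrow> 'a \<Rightarrow> 'a \<Rightarrow> bool" where
  "coded x c d b \<longleftrightarrow> lt x b \<and> divides (modulus x d) c"

lemma not_coded_pone:
  assumes "divisible_upto d b" "x \<in> D"
  shows "\<not> coded x pone d b"
proof
  assume "coded x pone d b"
  then have "divides (modulus x d) pone" unfolding coded_def by simp
  then have "modulus x d = pone" using divides_pone assms divisible_upto_D by simp
  then have "(psuc x) \<otimes> d = pzero"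
    unfolding modulus_def using assms divisible_upto_D by simp
  then show False using mul_eq_pzero_iff assms divisible_upto_D by simp
qed

lemma coded_mult_modulus:
  assumes div: "divisible_upto d b" and a: "a \<in> D" "lt a b" and c: "c \<in> D" and x: "x \<in> D"
  shows "coded x (c \<otimes> modulus a d) d b \<longleftrightarrow> coded x c d b \<or> x = a"
proof
  assume m: "coded x (c \<otimes> modulus a d) d b"
  show "coded x c d b \<or> x = a"
  proof (cases "x = a")
    case False
    have "rel_prime (modulus x d) (modulus a d)"
      using rel_prime_moduli[OF div x a(1) _ a(2) False] m unfolding coded_def by simp
    then have "divides (modulus x d) c"
      using rel_prime_divides_mult[of "modulus x d" "modulus a d" c] m x a c divisible_upto_D[OF div]
      unfolding coded_def by simp
    then show ?thesis using m unfolding coded_def by simp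
  qed simp
next
  assume "coded x c d b \<or> x = a"
  then show "coded x (c \<otimes> modulus a d) d b"
  proof
    assume "coded x c d b" then show ?thesis
      using divides_mult a c x divisible_upto_D[OF div] unfolding coded_def by simp
  next
    assume "x = a" then show ?thesis
      using divides_mult_left a c divisible_upto_D[OF div] unfolding coded_def by simp
  qed
qed

lemma eval_coded_fm [simp]:
  assumes "k \<notin> tvars x" "k \<noteq> b" "k \<noteq> c" "k \<noteq> d" "k \<noteq> one" "e one = pone"
  shows "eval D F e (coded_fm p m x c d b one k) = coded (evalt F e x) (e c) (e d) (e b)"
proof -
  have "\<And>a. evalt F (e(k:=a)) x = evalt F e x" using assms by (intro evalt_cong) auto
  then show ?thesis using assms by (simp add: coded_fm_def coded_def modulus_def divides_def)
qed

lemma recode: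
  assumes div: "divisible_upto d b" "divisible_upto d' b'"
    and bb: "le b b'" "b \<in> D" "b' \<in> D" and c: "c \<in> D"
  shows "\<exists>c'\<in>D. \<forall>x\<in>D. coded x c' d' b' \<longleftrightarrow> coded x c d b"
proof -
  have dd: "d \<in> D" "d' \<in> D" using div divisible_upto_D by auto
  have "\<exists>c'\<in>D. \<forall>x\<in>D. coded x c' d' b' \<longleftrightarrow> (lt x b \<and> coded x c d b)"
  proof (rule definable_induct[where e="std_env(2:=c, 3:=d, 4:=b, 5:=d', 6:=b')" and y=7
      and P="\<lambda>k. \<exists>c'\<in>D. \<forall>x\<in>D. coded x c' d' b' \<longleftrightarrow> (lt x k \<and> coded x c d b)"
      and \<phi>="Ex 8 (All 9 (Iff (coded_fm p m (Var 9) 8 5 6 1 10)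
        (And (lt_fm p (Var 9) 7 1 10) (coded_fm p m (Var 9) 2 3 4 1 10))))", OF _ _ _ _ bb(2)])
    fix k assume k: "k \<in> D" and IH: "\<exists>c'\<in>D. \<forall>x\<in>D. coded x c' d' b' \<longleftrightarrow> (lt x k \<and> coded x c d b)"
    then obtain c' where c': "c' \<in> D" "\<forall>x\<in>D. coded x c' d' b' \<longleftrightarrow> (lt x k \<and> coded x c d b)"
      by blast
    have ltS: "\<And>x. x \<in> D \<Longrightarrow> lt x (psuc k) \<longleftrightarrow> lt x k \<or> x = k"
      using lt_psuc_iff lt_iff k by auto
    show "\<exists>c'\<in>D. \<forall>x\<in>D. coded x c' d' b' \<longleftrightarrow> (lt x (psuc k) \<and> coded x c d b)"
    proof (cases "coded k c d b")
      case True
      then have "lt k b'" using bb k lt_le_trans unfolding coded_def by blast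
      then have "\<forall>x\<in>D. coded x (c' \<otimes> modulus k d') d' b' \<longleftrightarrow> (lt x (psuc k) \<and> coded x c d b)"
        using coded_mult_modulus[OF div(2) k _ c'(1)] c'(2) ltS True by auto
      then show ?thesis using c' k dd by (intro bexI[of _ "c' \<otimes> modulus k d'"]) auto
    next
      case False
      then have "\<forall>x\<in>D. coded x c' d' b' \<longleftrightarrow> (lt x (psuc k) \<and> coded x c d b)"
        using c'(2) ltS by auto
      then show ?thesis using c' by blast
    qed
  next
    show "\<exists>c'\<in>D. \<forall>x\<in>D. coded x c' d' b' \<longleftrightarrow> (lt x pzero \<and> coded x c d b)"
      using not_coded_pone[OF div(2)] by (intro bexI[of _ pone]) auto
  qed (use bb c dd in \<open>auto simp: env_in\<close>)
  then show ?thesis unfolding coded_def by auto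
qed

lemma coded_insert:
  assumes div: "divisible_upto d b" and b: "b \<in> D" and c: "c \<in> D" and a: "a \<in> D"
  shows "\<exists>c'\<in>D. \<exists>d'. \<exists>b'\<in>D. divisible_upto d' b' \<and> (\<forall>x\<in>D. coded x c' d' b' \<longleftrightarrow> coded x c d b \<or> x = a)"
proof -
  define b' where "b' = psuc (a \<oplus> b)"
  have b'D: "b' \<in> D" using a b unfolding b'_def by simp
  have "lt a b'" using a b unfolding b'_def lt_def by blast
  moreover have "lt b b'"
    using a b add_comm[of b a] unfolding b'_def lt_def by (intro bexI[of _ a]) auto
  then have "le b b'" using lt_imp_le b by blast
  ultimately have b': "b' \<in> D" "le b b'" "lt a b'" using b'D by auto
  obtain d' where d': "divisible_upto d' b'" using divisible_upto_exists b' by blast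
  obtain c' where c': "c' \<in> D" "\<forall>x\<in>D. coded x c' d' b' \<longleftrightarrow> coded x c d b"
    using recode[OF div d' b'(2) b b'(1) c] by blast
  have "\<forall>x\<in>D. coded x (c' \<otimes> modulus a d') d' b' \<longleftrightarrow> coded x c d b \<or> x = a"
    using coded_mult_modulus[OF d' a b'(3) c'(1)] c'(2) by auto
  then show ?thesis
    using c' a b' d' divisible_upto_D[OF d']
    by (intro bexI[of _ "c' \<otimes> modulus a d'"] exI[of _ d'] bexI[of _ b']) auto
qed

definition pair :: "'a \<Rightarrow> 'a \<Rightarrow> 'a" where
  "pair i j = (i \<oplus> j) \<otimes> (i \<oplus> j) \<oplus> i"
lemma pair_in [simp]: "i \<in> D \<Longrightarrow> j \<in> D \<Longrightarrow> pair i j \<in> D"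
  unfolding pair_def by simp

lemma pair_less:
  assumes ij: "i \<in> D" "j \<in> D" "i' \<in> D" "j' \<in> D" and st: "lt (i \<oplus> j) (i' \<oplus> j')"
  shows "lt (pair i j) (pair i' j')"
proof -
  define s where "s = i \<oplus> j"
  define t where "t = i' \<oplus> j'"
  have sD: "s \<in> D" "t \<in> D" using ij unfolding s_def t_def by auto
  have lst: "lt s t" using st unfolding s_def t_def .
  have "le (psuc s) t" using lt_imp_psuc_le lst sD by blast
  then have "le (t \<otimes> psuc s) (t \<otimes> t)" using mul_le_mono2 sD by simp
  then have 1: "le (t \<otimes> s \<oplus> t) (t \<otimes> t)" using sD by (simp add: mul_psuc)
  have "le (s \<otimes> s) (t \<otimes> s)" using mul_le_mono lt_imp_le lst sD by blast
  then have "le (s \<otimes> s \<oplus> t) (t \<otimes> s \<oplus> t)" using add_le_mono sD by simp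
  then have 2: "le (s \<otimes> s \<oplus> t) (t \<otimes> t)" using 1 le_trans sD by simp
  have "le i s" using ij unfolding s_def by simp
  then have "lt i t" using le_lt_trans lst ij sD by blast
  then have "lt (i \<oplus> s \<otimes> s) (t \<oplus> s \<otimes> s)"
    using add_lt_mono sD ij by simp
  then have "lt (s \<otimes> s \<oplus> i) (s \<otimes> s \<oplus> t)"
    using add_comm sD ij by (metis F_closed)
  then have "lt (s \<otimes> s \<oplus> i) (t \<otimes> t)"
    using lt_le_trans 2 sD ij by (meson F_closed)
  moreover have "le (t \<otimes> t) (t \<otimes> t \<oplus> i')" using sD ij by simp
  ultimately have "lt (s \<otimes> s \<oplus> i) (t \<otimes> t \<oplus> i')"
    using lt_le_trans sD ij by (meson F_closed)
  then show ?thesis unfolding pair_def s_def t_def .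
qed

lemma pair_inject:
  assumes ij: "i \<in> D" "j \<in> D" "i' \<in> D" "j' \<in> D" and eq: "pair i j = pair i' j'"
  shows "i = i' \<and> j = j'"
proof -
  have "lt (i \<oplus> j) (i' \<oplus> j') \<or> i \<oplus> j = i' \<oplus> j' \<or> lt (i' \<oplus> j') (i \<oplus> j)"
    using lt_trichotomy ij by simp
  moreover have "\<not> lt (i \<oplus> j) (i' \<oplus> j')" using pair_less[OF ij] eq ij by auto
  moreover have "\<not> lt (i' \<oplus> j') (i \<oplus> j)"
    using pair_less[OF ij(3,4,1,2)] eq ij by auto
  ultimately have s: "i \<oplus> j = i' \<oplus> j'" by blast
  then have "i = i'" using eq ij unfolding pair_def by simp
  then show ?thesis using s ij by simp
qed

end

section \<open>The isomorphism between two models\<close>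

locale peano_pair = P: peano_model D F Plus Times + Q: peano_model D F Plus' Times' for D F
begin

text \<open>A coded set with \<open>pred_closed\<close> is a finite piece of the graph of the recursion
  \<open>\<pi> 0 = 0'\<close>, \<open>\<pi> (x + 1) = \<pi> x +' 1'\<close>; \<open>iso\<close> is the union of all such pieces.\<close>

definition has_predecessor :: "'a \<Rightarrow> 'a \<Rightarrow> 'a \<Rightarrow> 'a \<Rightarrow> 'a \<Rightarrow> bool" where
  "has_predecessor c d b i j \<longleftrightarrow> (i = P.pzero \<longrightarrow> j = Q.pzero) \<and>
     (i \<noteq> P.pzero \<longrightarrow>
       (\<exists>i'\<in>D. \<exists>j'\<in>D. i = P.psuc i' \<and> P.coded (P.pair i' j') c d b \<and> j = Q.psuc j'))"

definition pred_closed :: "'a \<Rightarrow> 'a \<Rightarrow> 'a \<Rightarrow> bool" where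
  "pred_closed c d b \<longleftrightarrow>
     (\<forall>i\<in>D. \<forall>j\<in>D. P.coded (P.pair i j) c d b \<longrightarrow> has_predecessor c d b i j)"

definition iso :: "'a \<Rightarrow> 'a \<Rightarrow> bool" where
  "iso u v \<longleftrightarrow> (\<exists>c\<in>D. \<exists>d\<in>D. \<exists>b\<in>D.
     P.divisible_upto d b \<and> pred_closed c d b \<and> P.coded (P.pair u v) c d b)"

lemma has_predecessor_mono:
  assumes "has_predecessor c d b i j" and "\<forall>x\<in>D. P.coded x c d b \<longrightarrow> P.coded x c' d' b'"
  shows "has_predecessor c' d' b' i j"
  using assms unfolding has_predecessor_def by (meson P.pair_in)

lemma pred_closed_insert:
  assumes closed: "pred_closed c d b" and u: "u \<in> D" "v \<in> D" and pred: "has_predecessor c d b u v"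
    and coded: "\<forall>x\<in>D. P.coded x c' d' b' \<longleftrightarrow> P.coded x c d b \<or> x = P.pair u v"
  shows "pred_closed c' d' b'"
  unfolding pred_closed_def
proof (intro ballI impI)
  fix i j
  assume ij: "i \<in> D" "j \<in> D" "P.coded (P.pair i j) c' d' b'"
  then have "P.coded (P.pair i j) c d b \<or> P.pair i j = P.pair u v"
    using coded by simp
  then have "P.coded (P.pair i j) c d b \<or> i = u \<and> j = v"
    using P.pair_inject[OF ij(1,2) u] by blast
  then have "has_predecessor c d b i j"
    using closed pred ij unfolding pred_closed_def by blast
  then show "has_predecessor c' d' b' i j"
    using has_predecessor_mono coded by blast
qed

lemma iso_pzero: "iso P.pzero Q.pzero"
proof -
  have "P.pair P.pzero Q.pzero \<in> D" by simp
  then obtain c d b where "c \<in> D" "b \<in> D" "P.divisible_upto d b"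
    and coded: "\<forall>x\<in>D. P.coded x c d b \<longleftrightarrow> P.coded x P.pone P.pone P.pzero \<or> x = P.pair P.pzero Q.pzero"
    using P.coded_insert[OF P.divisible_upto_pzero P.pzero_in P.pone_in] by blast
  moreover have "pred_closed P.pone P.pone P.pzero"
    using P.not_coded_pone[OF P.divisible_upto_pzero] unfolding pred_closed_def by simp
  then have "pred_closed c d b"
    by (rule pred_closed_insert[OF _ P.pzero_in Q.pzero_in _ coded]) (simp add: has_predecessor_def)
  moreover have "P.coded (P.pair P.pzero Q.pzero) c d b"
    using coded by simp
  ultimately show ?thesis
    unfolding iso_def using P.divisible_upto_D by blast
qed

lemma iso_psuc:
  assumes uv: "u \<in> D" "v \<in> D" and "iso u v"
  shows "iso (P.psuc u) (Q.psuc v)"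
proof -
  obtain c d b where cdb: "c \<in> D" "b \<in> D" "P.divisible_upto d b" "pred_closed c d b"
    and uv_coded: "P.coded (P.pair u v) c d b"
    using \<open>iso u v\<close> unfolding iso_def by blast
  have "P.pair (P.psuc u) (Q.psuc v) \<in> D" using uv by simp
  then obtain c' d' b' where "c' \<in> D" "b' \<in> D" "P.divisible_upto d' b'"
    and coded: "\<forall>x\<in>D. P.coded x c' d' b' \<longleftrightarrow> P.coded x c d b \<or> x = P.pair (P.psuc u) (Q.psuc v)"
    using P.coded_insert[OF cdb(3,2,1)] by blast
  moreover have "has_predecessor c d b (P.psuc u) (Q.psuc v)"
    using uv uv_coded unfolding has_predecessor_def by auto
  then have "pred_closed c' d' b'"
    using pred_closed_insert[OF cdb(4) _ _ _ coded] uv by simp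
  moreover have "P.coded (P.pair (P.psuc u) (Q.psuc v)) c' d' b'"
    using coded uv by simp
  ultimately show ?thesis
    unfolding iso_def using P.divisible_upto_D by blast
qed

lemma iso_pzero_left:
  assumes "v \<in> D" "iso P.pzero v"
  shows "v = Q.pzero"
proof -
  obtain c d b where "pred_closed c d b" "P.coded (P.pair P.pzero v) c d b"
    using assms unfolding iso_def by blast
  then have "has_predecessor c d b P.pzero v"
    using assms unfolding pred_closed_def by simp
  then show ?thesis unfolding has_predecessor_def by simp
qed

lemma iso_psuc_left:
  assumes "u \<in> D" "w \<in> D" "iso (P.psuc u) w"
  shows "\<exists>v\<in>D. iso u v \<and> w = Q.psuc v"
proof -
  obtain c d b where cdb: "c \<in> D" "d \<in> D" "b \<in> D" "P.divisible_upto d b" "pred_closed c d b"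
    and "P.coded (P.pair (P.psuc u) w) c d b"
    using assms unfolding iso_def by blast
  then have "has_predecessor c d b (P.psuc u) w"
    using assms unfolding pred_closed_def by simp
  then obtain v where "v \<in> D" "P.coded (P.pair u v) c d b" "w = Q.psuc v"
    using assms unfolding has_predecessor_def by auto
  then show ?thesis using cdb unfolding iso_def by blast
qed

lemma iso_pzero_right:
  assumes "u \<in> D" "iso u Q.pzero"
  shows "u = P.pzero"
proof (rule P.pzero_psuc_cases[OF assms(1)])
  fix u'
  assume "u' \<in> D" "u = P.psuc u'"
  then obtain v where "v \<in> D" "Q.pzero = Q.psuc v"
    using iso_psuc_left assms Q.pzero_in by blast
  then show ?thesis by simp
qed

lemma iso_psuc_right:
  assumes "u \<in> D" "v \<in> D" "iso u (Q.psuc v)"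
  shows "\<exists>u'\<in>D. u = P.psuc u' \<and> iso u' v"
proof (rule P.pzero_psuc_cases[OF assms(1)])
  assume "u = P.pzero"
  then show ?thesis using assms iso_pzero_left[of "Q.psuc v"] by simp
next
  fix u'
  assume "u' \<in> D" "u = P.psuc u'"
  then obtain v' where "v' \<in> D" "iso u' v'" "Q.psuc v = Q.psuc v'"
    using iso_psuc_left[of u' "Q.psuc v"] assms by auto
  then show ?thesis using \<open>u' \<in> D\<close> \<open>u = P.psuc u'\<close> assms(2) by auto
qed

end

definition pair_tm :: "nat \<Rightarrow> nat \<Rightarrow> trm" where
  "pair_tm i j = Fn Plus (Fn Times (Fn Plus (Var i) (Var j)) (Fn Plus (Var i) (Var j))) (Var i)"

lemma tvars_pair_tm [simp]: "tvars (pair_tm i j) = {i, j}"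
  by (auto simp: pair_tm_def)

text \<open>In the formulas below \<open>Var 2\<close>, \<open>Var 3\<close>, \<open>Var 4\<close>, \<open>Var 5\<close> name the neutral elements of
  \<open>+\<close>, \<open>\<cdot>\<close>, \<open>+'\<close>, \<open>\<cdot>'\<close>, and \<open>Var 6\<close>, \<open>Var 7\<close>, \<open>Var 8\<close> the codes \<open>c\<close>, \<open>d\<close>, \<open>b\<close>
  of a finite set of pairs; \<open>Var 9\<close> to \<open>Var 13\<close> are bound auxiliaries.\<close>

definition pred_closed_fm :: form where
  "pred_closed_fm = All 9 (All 10 (Imp (coded_fm Plus Times (pair_tm 9 10) 6 7 8 3 13)
     (And (Imp (Eq (Var 9) (Var 2)) (Eq (Var 10) (Var 4)))
          (Imp (Neg (Eq (Var 9) (Var 2)))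
               (Ex 11 (Ex 12 (And (Eq (Var 9) (Fn Plus (Var 11) (Var 3)))
                 (And (coded_fm Plus Times (pair_tm 11 12) 6 7 8 3 13)
                      (Eq (Var 10) (Fn Plus' (Var 12) (Var 5)))))))))))"

definition iso_fm :: form where
  "iso_fm = Ex 2 (Ex 3 (Ex 4 (Ex 5 (And (ZERO Plus 2) (And (ZERO Times 3) (And (ZERO Plus' 4)
     (And (ZERO Times' 5) (Ex 6 (Ex 7 (Ex 8 (And (divisible_upto_fm Plus Times 7 8 2 9 10)
        (And pred_closed_fm (coded_fm Plus Times (pair_tm 0 1) 6 7 8 3 13)))))))))))))"

lemma fv_iso_fm: "fv iso_fm \<subseteq> {0, 1}"
  unfolding iso_fm_def pred_closed_fm_def divisible_upto_fm_def coded_fm_def lt_fm_def le_fm_def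
    pair_tm_def ZERO_def And_def Ex_def Neg_def
  by auto

lemma eval_inst:
  assumes "0 \<notin> tvars t1" "1 \<notin> tvars t1" "0 \<notin> tvars t2" "1 \<notin> tvars t2"
    and "evalt F e t1 \<in> D" "evalt F e t2 \<in> D"
  shows "eval D F e (inst th t1 t2) = eval D F (e(0 := evalt F e t1, 1 := evalt F e t2)) th"
proof -
  have "evalt F (e(0:=a, 1:=b)) t1 = evalt F e t1" "evalt F (e(0:=a, 1:=b)) t2 = evalt F e t2" for a b
    using assms by (auto intro: evalt_cong)
  then show ?thesis using assms unfolding inst_def by auto
qed

context peano_pair
begin

lemma evalt_pair_tm [simp]: "evalt F e (pair_tm i j) = P.pair (e i) (e j)"
  by (simp add: pair_tm_def P.pair_def)

lemma eval_pred_closed_fm: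
  "e 2 = P.pzero \<Longrightarrow> e 3 = P.pone \<Longrightarrow> e 4 = Q.pzero \<Longrightarrow> e 5 = Q.pone \<Longrightarrow>
    eval D F e pred_closed_fm = pred_closed (e 6) (e 7) (e 8)"
  by (simp add: pred_closed_fm_def pred_closed_def has_predecessor_def)

lemma eval_iso_fm: "\<forall>n. e n \<in> D \<Longrightarrow> eval D F e iso_fm = iso (e 0) (e 1)"
  by (simp add: iso_fm_def eval_pred_closed_fm P.eval_divisible_upto_fm iso_def)

lemma eval_inst_iso_fm [simp]:
  assumes "0 \<notin> tvars t1" "1 \<notin> tvars t1" "0 \<notin> tvars t2" "1 \<notin> tvars t2" "\<forall>n. e n \<in> D"
  shows "eval D F e (inst iso_fm t1 t2) = iso (evalt F e t1) (evalt F e t2)"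
proof -
  have t: "evalt F e t1 \<in> D" "evalt F e t2 \<in> D"
    using assms evalt_closed[of D F] by auto
  then have "\<forall>n. (e(0 := evalt F e t1, 1 := evalt F e t2)) n \<in> D"
    using assms by simp
  then show ?thesis using eval_inst[OF assms(1-4) t] eval_iso_fm by simp
qed

lemma iso_total:
  assumes "u \<in> D"
  shows "\<exists>v\<in>D. iso u v"
proof (rule P.definable_induct[where e=P.std_env and y=2 and P="\<lambda>u. \<exists>v\<in>D. iso u v"
    and \<phi>="Ex 3 (inst iso_fm (Var 2) (Var 3))", OF _ _ _ _ assms])
  fix u
  assume "u \<in> D" and "\<exists>v\<in>D. iso u v"
  then obtain v where "v \<in> D" "iso u v" by blast
  then show "\<exists>v\<in>D. iso (P.psuc u) v"
    using iso_psuc \<open>u \<in> D\<close> by (intro bexI[of _ "Q.psuc v"]) auto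
qed (use iso_pzero in \<open>auto simp: P.env_in\<close>)

lemma iso_functional:
  assumes "u \<in> D"
  shows "\<forall>v\<in>D. \<forall>v'\<in>D. iso u v \<and> iso u v' \<longrightarrow> v = v'"
proof (rule P.definable_induct[where e=P.std_env and y=2
    and P="\<lambda>u. \<forall>v\<in>D. \<forall>v'\<in>D. iso u v \<and> iso u v' \<longrightarrow> v = v'"
    and \<phi>="All 3 (All 4 (Imp (And (inst iso_fm (Var 2) (Var 3)) (inst iso_fm (Var 2) (Var 4)))
      (Eq (Var 3) (Var 4))))",
    OF _ _ _ _ assms])
  fix u
  assume u: "u \<in> D" and IH: "\<forall>v\<in>D. \<forall>v'\<in>D. iso u v \<and> iso u v' \<longrightarrow> v = v'"
  show "\<forall>v\<in>D. \<forall>v'\<in>D. iso (P.psuc u) v \<and> iso (P.psuc u) v' \<longrightarrow> v = v'"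
  proof (intro ballI impI)
    fix v v'
    assume "v \<in> D" "v' \<in> D" "iso (P.psuc u) v \<and> iso (P.psuc u) v'"
    then obtain w w' where "w \<in> D" "iso u w" "v = Q.psuc w" "w' \<in> D" "iso u w'" "v' = Q.psuc w'"
      using iso_psuc_left u by meson
    then show "v = v'" using IH by simp
  qed
qed (auto simp: P.env_in dest: iso_pzero_left)

lemma iso_injective:
  assumes "u \<in> D"
  shows "\<forall>u'\<in>D. \<forall>v\<in>D. iso u v \<and> iso u' v \<longrightarrow> u = u'"
proof (rule P.definable_induct[where e=P.std_env and y=2
    and P="\<lambda>u. \<forall>u'\<in>D. \<forall>v\<in>D. iso u v \<and> iso u' v \<longrightarrow> u = u'"
    and \<phi>="All 3 (All 4 (Imp (And (inst iso_fm (Var 2) (Var 4)) (inst iso_fm (Var 3) (Var 4)))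
      (Eq (Var 2) (Var 3))))",
    OF _ _ _ _ assms])
  fix u
  assume u: "u \<in> D" and IH: "\<forall>u'\<in>D. \<forall>v\<in>D. iso u v \<and> iso u' v \<longrightarrow> u = u'"
  show "\<forall>u'\<in>D. \<forall>v\<in>D. iso (P.psuc u) v \<and> iso u' v \<longrightarrow> P.psuc u = u'"
  proof (intro ballI impI)
    fix u' v
    assume "u' \<in> D" "v \<in> D" "iso (P.psuc u) v \<and> iso u' v"
    moreover obtain w where "w \<in> D" "iso u w" "v = Q.psuc w"
      using iso_psuc_left u \<open>v \<in> D\<close> \<open>iso (P.psuc u) v \<and> iso u' v\<close> by blast
    ultimately obtain u'' where "u'' \<in> D" "u' = P.psuc u''" "iso u'' w"
      using iso_psuc_right by blast
    then show "P.psuc u = u'" using IH \<open>w \<in> D\<close> \<open>iso u w\<close> by blast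
  qed
qed (auto simp: P.env_in dest: iso_pzero_left iso_pzero_right)

lemma iso_surjective:
  assumes "v \<in> D"
  shows "\<exists>u\<in>D. iso u v"
proof (rule Q.definable_induct[where e=P.std_env and y=3 and P="\<lambda>v. \<exists>u\<in>D. iso u v"
    and \<phi>="Ex 2 (inst iso_fm (Var 2) (Var 3))", OF _ _ _ _ assms])
  fix v
  assume "v \<in> D" and "\<exists>u\<in>D. iso u v"
  then obtain u where "u \<in> D" "iso u v" by blast
  then show "\<exists>u\<in>D. iso u (Q.psuc v)"
    using iso_psuc \<open>v \<in> D\<close> by (intro bexI[of _ "P.psuc u"]) auto
qed (use iso_pzero in \<open>auto simp: P.env_in\<close>)

lemma iso_add:
  assumes "z \<in> D"
  shows "\<forall>x\<in>D. \<forall>y\<in>D. \<forall>w\<in>D. iso x y \<and> iso z w \<longrightarrow> iso (F Plus x z) (F Plus' y w)"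
proof (rule P.definable_induct[where e=P.std_env and y=2
    and P="\<lambda>z. \<forall>x\<in>D. \<forall>y\<in>D. \<forall>w\<in>D. iso x y \<and> iso z w \<longrightarrow> iso (F Plus x z) (F Plus' y w)"
    and \<phi>="All 3 (All 4 (All 5 (Imp (And (inst iso_fm (Var 3) (Var 4)) (inst iso_fm (Var 2) (Var 5)))
      (inst iso_fm (Fn Plus (Var 3) (Var 2)) (Fn Plus' (Var 4) (Var 5))))))",
    OF _ _ _ _ assms])
  fix z
  assume z: "z \<in> D"
    and IH: "\<forall>x\<in>D. \<forall>y\<in>D. \<forall>w\<in>D. iso x y \<and> iso z w \<longrightarrow> iso (F Plus x z) (F Plus' y w)"
  show "\<forall>x\<in>D. \<forall>y\<in>D. \<forall>w\<in>D. iso x y \<and> iso (P.psuc z) w \<longrightarrow>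
    iso (F Plus x (P.psuc z)) (F Plus' y w)"
  proof (intro ballI impI)
    fix x y w
    assume xy: "x \<in> D" "y \<in> D" "w \<in> D" "iso x y \<and> iso (P.psuc z) w"
    then obtain w' where w': "w' \<in> D" "iso z w'" "w = Q.psuc w'"
      using iso_psuc_left z by blast
    then have "iso (F Plus x z) (F Plus' y w')"
      using IH xy by blast
    then show "iso (F Plus x (P.psuc z)) (F Plus' y w)"
      using iso_psuc[of "F Plus x z" "F Plus' y w'"] xy z w' by (simp add: P.add_psuc Q.add_psuc)
  qed
qed (auto simp: P.env_in dest: iso_pzero_left)

lemma iso_mul:
  assumes "z \<in> D"
  shows "\<forall>x\<in>D. \<forall>y\<in>D. \<forall>w\<in>D. iso x y \<and> iso z w \<longrightarrow> iso (F Times x z) (F Times' y w)"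
proof (rule P.definable_induct[where e=P.std_env and y=2
    and P="\<lambda>z. \<forall>x\<in>D. \<forall>y\<in>D. \<forall>w\<in>D. iso x y \<and> iso z w \<longrightarrow> iso (F Times x z) (F Times' y w)"
    and \<phi>="All 3 (All 4 (All 5 (Imp (And (inst iso_fm (Var 3) (Var 4)) (inst iso_fm (Var 2) (Var 5)))
      (inst iso_fm (Fn Times (Var 3) (Var 2)) (Fn Times' (Var 4) (Var 5))))))",
    OF _ _ _ _ assms])
  fix z
  assume z: "z \<in> D"
    and IH: "\<forall>x\<in>D. \<forall>y\<in>D. \<forall>w\<in>D. iso x y \<and> iso z w \<longrightarrow> iso (F Times x z) (F Times' y w)"
  show "\<forall>x\<in>D. \<forall>y\<in>D. \<forall>w\<in>D. iso x y \<and> iso (P.psuc z) w \<longrightarrow>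
    iso (F Times x (P.psuc z)) (F Times' y w)"
  proof (intro ballI impI)
    fix x y w
    assume xy: "x \<in> D" "y \<in> D" "w \<in> D" "iso x y \<and> iso (P.psuc z) w"
    then obtain w' where w': "w' \<in> D" "iso z w'" "w = Q.psuc w'"
      using iso_psuc_left z by blast
    then have "iso (F Times x z) (F Times' y w')"
      using IH xy by blast
    then have "iso (F Plus (F Times x z) x) (F Plus' (F Times' y w') y)"
      using iso_add[of x] xy z w' by simp
    then show "iso (F Times x (P.psuc z)) (F Times' y w)"
      using xy z w' by (simp add: P.mul_psuc Q.mul_psuc)
  qed
next
  show "\<forall>x\<in>D. \<forall>y\<in>D. \<forall>w\<in>D. iso x y \<and> iso P.pzero w \<longrightarrow>
    iso (F Times x P.pzero) (F Times' y w)"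
  proof (intro ballI impI)
    fix x y w
    assume "x \<in> D" "y \<in> D" "w \<in> D" "iso x y \<and> iso P.pzero w"
    then have "w = Q.pzero" using iso_pzero_left by blast
    then show "iso (F Times x P.pzero) (F Times' y w)"
      using \<open>x \<in> D\<close> \<open>y \<in> D\<close> iso_pzero by simp
  qed
qed (auto simp: P.env_in)

lemma eval_ISOM_iso_fm:
  assumes e: "\<forall>n. e n \<in> D"
  shows "eval D F e (ISOM iso_fm)"
proof -
  have "\<forall>a\<in>D. \<exists>b\<in>D. iso a b \<and> (\<forall>c\<in>D. iso a c \<longrightarrow> c = b)"
  proof
    fix a
    assume a: "a \<in> D"
    then obtain b where "b \<in> D" "iso a b" using iso_total by blast
    then show "\<exists>b\<in>D. iso a b \<and> (\<forall>c\<in>D. iso a c \<longrightarrow> c = b)"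
      using iso_functional[OF a] by blast
  qed
  moreover have "\<forall>b\<in>D. \<exists>a\<in>D. iso a b"
    using iso_surjective by blast
  moreover have "\<forall>a\<in>D. \<forall>c\<in>D. \<forall>b\<in>D. iso a b \<and> iso c b \<longrightarrow> a = c"
    using iso_injective by blast
  moreover have "\<forall>a\<in>D. \<forall>b\<in>D. \<forall>c\<in>D. \<forall>d\<in>D. iso a c \<and> iso b d \<longrightarrow> iso (F Plus a b) (F Plus' c d)"
    using iso_add by blast
  moreover have "\<forall>a\<in>D. \<forall>b\<in>D. \<forall>c\<in>D. \<forall>d\<in>D. iso a c \<and> iso b d \<longrightarrow> iso (F Times a b) (F Times' c d)"
    using iso_mul by blast
  ultimately show ?thesis
    using e unfolding ISOM_def TOTAL_def ONTO_def INJ_def HOM_def by simp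
qed

end

lemma fv_PA: "q \<in> PA p m \<Longrightarrow> fv q = {}"
  unfolding PA_def PA_basic_def IND_def Let_def ZERO_def And_def Neg_def Ex_def by auto

lemma peano_pair_if_model:
  assumes "\<forall>f. \<forall>a\<in>D. \<forall>b\<in>D. F f a b \<in> D" and e: "\<forall>n. e n \<in> D"
    and valid: "\<forall>q\<in>PA Plus Times \<union> PA Plus' Times'. eval D F e q"
  shows "peano_pair D F"
proof -
  have "eval D F e' q" if "q \<in> PA Plus Times \<union> PA Plus' Times'" for q e'
    using valid that fv_PA eval_cong[of q e' e] by blast
  moreover have "D \<noteq> {}" using e by auto
  ultimately show ?thesis
    using assms(1) by unfold_locales auto
qed

theorem mainTheorem4:
  shows "\<exists>theta. fv theta \<subseteq> {0, 1} \<and>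
           (PA Plus Times \<union> PA Plus' Times') \<turnstile> ISOM theta"
proof (intro exI conjI)
  show "fv iso_fm \<subseteq> {0, 1}" by (rule fv_iso_fm)
  show "PA Plus Times \<union> PA Plus' Times' \<turnstile> ISOM iso_fm"
  proof (rule completeness)
    show "\<forall>q\<in>PA Plus Times \<union> PA Plus' Times'. fv q = {}"
      using fv_PA by blast
  next
    fix D :: "trm set set" and F e
    assume "\<forall>f. \<forall>a\<in>D. \<forall>b\<in>D. F f a b \<in> D" "\<forall>n. e n \<in> D"
      and "\<forall>q\<in>PA Plus Times \<union> PA Plus' Times'. eval D F e q"
    then interpret peano_pair D F by (rule peano_pair_if_model)
    show "eval D F e (ISOM iso_fm)" by (rule eval_ISOM_iso_fm) fact
  qed
qed

end
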